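(* Let $T$ be a monoid, $(X,\cdot)$ an order-preserving left action of $T$ on a semilattice $X$ with identity, and $Y$ a subsemilattice of $X$ with identity satisfying: (A) for all $t\in T$ and $e,f\in Y$ with $e\le f$, $t\cdot f\in Y$ implies $t\cdot e\in Y$; (B) for all $t\in T$ there exists $g\in Y$ with $t\cdot g\in Y$. Let $H^{\mathcal{Q}}=\{te:t\in T,e\in Y,t\cdot e\in Y\}$ and $\mathcal{Q}_\ell(T,X,Y)=\langle H^{\mathcal{Q}}\rangle_{(2)}\subseteq\mathcal{P}_\ell(T,X)$. Then $\mathcal{Q}_\ell(T,X,Y)$ is a subsemigroup of $\mathcal{P}_\ell(T,X)$ closed under $+$ and $*$, is a monoid with identity $1_Y$, is a $*$-left Ehresmann monoid with semilattice of projections $Y$, and $H^{\mathcal{Q}}$ is a proper basis of $\mathcal{Q}_\ell(T,X,Y)$.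
   Context: A semilattice is a commutative semigroup of idempotents, ordered by $e\le f$ iff $ef=e$; $\langle A\rangle_{(2)}$ is the subsemigroup generated by $A$. $\mathcal{P}_\ell(T,X)$: let $T*X$ be the semigroup free product acting on $X$ (elements of $X$ act by multiplication), $\omega^+=\omega\cdot1_X$, $\sim$ the semigroup congruence generated by $\{(\alpha^+\alpha,\alpha)\}\cup\{(1_T,1_X)\}$, and $\mathcal{P}_\ell(T,X)=(T*X)/\sim$ with $[\alpha]^+=[\alpha^+]$; $X$ and $T$ are identified with their injective images $\{[x]\}$, $\{[t]\}$. It is a left Ehresmann monoid with projections $X$ and unique $T$-normal forms $t_0e_1t_1\cdots e_nt_n$ ($n\ge0$, $e_i\in X\setminus\{1\}$, $t_1,\dots,t_{n-1}\in T\setminus\{1\}$, $e_i<(t_ie_{i+1}\cdots e_nt_n)^+$); its operation $*$ is $a^*=e_n$ if $n\ge1$ and $t_n=1$, $a^*=1$ otherwise. A $*$-left Ehresmann monoid is a monoid with unary operations $+,*$ satisfying $x^+x=x$, $(x^+y^+)^+=x^+y^+$, $x^+y^+=y^+x^+$, $(xy)^+=(xy^+)^+$, $xx^*=x$, $(x^* )^*=x^*$, $x^*y^*=y^*x^*$, $(xy^* )^*y^*=(xy^* )^*$, $(x^* )^+=x^*$, $(x^+)^*=x^+$; $E=\{a^+\}=\{a^*\}$; $\sigma$ is the least monoid congruence containing $E\times E$. $H\subseteq M$ is atomic if: (H1) $E\subseteq H$; (H2) $h\in H,e\in E$ imply $he\in H$ and $(he)^*=h^*e$; (H3) if $h\in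 H$, $k\in H\setminus E$, $h^*\ge k^+$ then $hk\in H$ and $(hk)^*=k^*$; (H4) every $m$ is $\sigma$-related to some $h\in H$; (H5) if $h,k,w\in H$, $hk\,\sigma\,w$, $k^*=w^*$, then some $u\in H$ has $u\,\sigma\,h$, $u^*\ge k^+$. $H$ is proper if ($h^*=k^*$ and $h\,\sigma\,k$) iff $h=k$. $h_1\cdots h_n$ is in $H$-canonical form if $h_i^*<h_{i+1}^+$ ($1\le i<n$) and $h_i\notin E$ ($2\le i\le n$); $M$ has $H$-canonical forms if each element has exactly one such expression. A basis is an atomic generating set $H$ for which $M$ has $H$-canonical forms; a proper basis is a basis which is proper. *)

theory Defs
  imports Main
begin

text \<open>A structure is given by a carrier M, a multiplication mul, an identity one,
  and unary operations pl (for +) and st (for *).\<close>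

definition sle :: "('a \<Rightarrow> 'a \<Rightarrow> 'a) \<Rightarrow> 'a \<Rightarrow> 'a \<Rightarrow> bool" where
  "sle mul e f \<longleftrightarrow> mul e f = e"

definition sless :: "('a \<Rightarrow> 'a \<Rightarrow> 'a) \<Rightarrow> 'a \<Rightarrow> 'a \<Rightarrow> bool" where
  "sless mul e f \<longleftrightarrow> sle mul e f \<and> e \<noteq> f"

definition is_monoid :: "'a set \<Rightarrow> ('a \<Rightarrow> 'a \<Rightarrow> 'a) \<Rightarrow> 'a \<Rightarrow> bool" where
  "is_monoid M mul one \<longleftrightarrow>
     one \<in> M \<and> (\<forall>x\<in>M. \<forall>y\<in>M. mul x y \<in> M) \<and>
     (\<forall>x\<in>M. \<forall>y\<in>M. \<forall>z\<in>M. mul (mul x y) z = mul x (mul y z)) \<and>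
     (\<forall>x\<in>M. mul one x = x \<and> mul x one = x)"

definition star_left_ehresmann ::
  "'a set \<Rightarrow> ('a \<Rightarrow> 'a \<Rightarrow> 'a) \<Rightarrow> 'a \<Rightarrow> ('a \<Rightarrow> 'a) \<Rightarrow> ('a \<Rightarrow> 'a) \<Rightarrow> bool" where
  "star_left_ehresmann M mul one pl st \<longleftrightarrow>
     is_monoid M mul one \<and> (\<forall>x\<in>M. pl x \<in> M \<and> st x \<in> M) \<and>
     (\<forall>x\<in>M. mul (pl x) x = x) \<and>
     (\<forall>x\<in>M. \<forall>y\<in>M. pl (mul (pl x) (pl y)) = mul (pl x) (pl y)) \<and>
     (\<forall>x\<in>M. \<forall>y\<in>M. mul (pl x) (pl y) = mul (pl y) (pl x)) \<and>
     (\<forall>x\<in>M. \<forall>y\<in>M. pl (mul x y) = pl (mul x (pl y))) \<and>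
     (\<forall>x\<in>M. mul x (st x) = x) \<and>
     (\<forall>x\<in>M. st (st x) = st x) \<and>
     (\<forall>x\<in>M. \<forall>y\<in>M. mul (st x) (st y) = mul (st y) (st x)) \<and>
     (\<forall>x\<in>M. \<forall>y\<in>M. mul (st (mul x (st y))) (st y) = st (mul x (st y))) \<and>
     (\<forall>x\<in>M. pl (st x) = st x) \<and>
     (\<forall>x\<in>M. st (pl x) = pl x)"

inductive_set sigma_rel :: "'a set \<Rightarrow> ('a \<Rightarrow> 'a \<Rightarrow> 'a) \<Rightarrow> 'a set \<Rightarrow> ('a \<times> 'a) set"
  for M mul E where
  base: "e \<in> E \<Longrightarrow> f \<in> E \<Longrightarrow> (e, f) \<in> sigma_rel M mul E"
| refl: "a \<in> M \<Longrightarrow> (a, a) \<in> sigma_rel M mul E"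
| sym: "(a, b) \<in> sigma_rel M mul E \<Longrightarrow> (b, a) \<in> sigma_rel M mul E"
| trans: "(a, b) \<in> sigma_rel M mul E \<Longrightarrow> (b, c) \<in> sigma_rel M mul E \<Longrightarrow> (a, c) \<in> sigma_rel M mul E"
| left: "(a, b) \<in> sigma_rel M mul E \<Longrightarrow> c \<in> M \<Longrightarrow> (mul c a, mul c b) \<in> sigma_rel M mul E"
| right: "(a, b) \<in> sigma_rel M mul E \<Longrightarrow> c \<in> M \<Longrightarrow> (mul a c, mul b c) \<in> sigma_rel M mul E"

definition sigma :: "'a set \<Rightarrow> ('a \<Rightarrow> 'a \<Rightarrow> 'a) \<Rightarrow> ('a \<Rightarrow> 'a) \<Rightarrow> ('a \<times> 'a) set" where
  "sigma M mul pl = sigma_rel M mul (pl ` M)"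

inductive_set sg_gen :: "('a \<Rightarrow> 'a \<Rightarrow> 'a) \<Rightarrow> 'a set \<Rightarrow> 'a set" for mul A where
  gen: "a \<in> A \<Longrightarrow> a \<in> sg_gen mul A"
| mul: "a \<in> sg_gen mul A \<Longrightarrow> b \<in> sg_gen mul A \<Longrightarrow> mul a b \<in> sg_gen mul A"

definition atomic ::
  "'a set \<Rightarrow> ('a \<Rightarrow> 'a \<Rightarrow> 'a) \<Rightarrow> ('a \<Rightarrow> 'a) \<Rightarrow> ('a \<Rightarrow> 'a) \<Rightarrow> 'a set \<Rightarrow> bool" where
  "atomic M mul pl st H \<longleftrightarrow> H \<subseteq> M \<and>
     \<comment> \<open>H1\<close> pl ` M \<subseteq> H \<and>
     \<comment> \<open>H2\<close> (\<forall>h\<in>H. \<forall>e\<in>pl ` M. mul h e \<in> H \<and> st (mul h e) = mul (st h) e) \<and>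
     \<comment> \<open>H3\<close> (\<forall>h\<in>H. \<forall>k\<in>H - pl ` M. sle mul (pl k) (st h) \<longrightarrow>
                 mul h k \<in> H \<and> st (mul h k) = st k) \<and>
     \<comment> \<open>H4\<close> (\<forall>m\<in>M. \<exists>h\<in>H. (m, h) \<in> sigma M mul pl) \<and>
     \<comment> \<open>H5\<close> (\<forall>h\<in>H. \<forall>k\<in>H. \<forall>w\<in>H. (mul h k, w) \<in> sigma M mul pl \<and> st k = st w \<longrightarrow>
                 (\<exists>u\<in>H. (u, h) \<in> sigma M mul pl \<and> sle mul (pl k) (st u)))"

definition proper ::
  "'a set \<Rightarrow> ('a \<Rightarrow> 'a \<Rightarrow> 'a) \<Rightarrow> ('a \<Rightarrow> 'a) \<Rightarrow> ('a \<Rightarrow> 'a) \<Rightarrow> 'a set \<Rightarrow> bool" where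
  "proper M mul pl st H \<longleftrightarrow>
     (\<forall>h\<in>H. \<forall>k\<in>H. (st h = st k \<and> (h, k) \<in> sigma M mul pl) \<longleftrightarrow> h = k)"

definition lprod :: "('a \<Rightarrow> 'a \<Rightarrow> 'a) \<Rightarrow> 'a list \<Rightarrow> 'a" where
  "lprod mul hs = foldr mul (butlast hs) (last hs)"

definition canonical_form ::
  "'a set \<Rightarrow> ('a \<Rightarrow> 'a \<Rightarrow> 'a) \<Rightarrow> ('a \<Rightarrow> 'a) \<Rightarrow> ('a \<Rightarrow> 'a) \<Rightarrow> 'a set \<Rightarrow> 'a list \<Rightarrow> bool" where
  "canonical_form M mul pl st H hs \<longleftrightarrow> hs \<noteq> [] \<and> set hs \<subseteq> H \<and>
     (\<forall>i. Suc i < length hs \<longrightarrow> sless mul (st (hs ! i)) (pl (hs ! Suc i))) \<and>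
     (\<forall>i. 0 < i \<and> i < length hs \<longrightarrow> hs ! i \<notin> pl ` M)"

definition has_canonical_forms ::
  "'a set \<Rightarrow> ('a \<Rightarrow> 'a \<Rightarrow> 'a) \<Rightarrow> ('a \<Rightarrow> 'a) \<Rightarrow> ('a \<Rightarrow> 'a) \<Rightarrow> 'a set \<Rightarrow> bool" where
  "has_canonical_forms M mul pl st H \<longleftrightarrow>
     (\<forall>m\<in>M. \<exists>!hs. canonical_form M mul pl st H hs \<and> lprod mul hs = m)"

definition basis ::
  "'a set \<Rightarrow> ('a \<Rightarrow> 'a \<Rightarrow> 'a) \<Rightarrow> ('a \<Rightarrow> 'a) \<Rightarrow> ('a \<Rightarrow> 'a) \<Rightarrow> 'a set \<Rightarrow> bool" where
  "basis M mul pl st H \<longleftrightarrow> atomic M mul pl st H \<and> sg_gen mul H = M \<and>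
     has_canonical_forms M mul pl st H"

definition proper_basis ::
  "'a set \<Rightarrow> ('a \<Rightarrow> 'a \<Rightarrow> 'a) \<Rightarrow> ('a \<Rightarrow> 'a) \<Rightarrow> ('a \<Rightarrow> 'a) \<Rightarrow> 'a set \<Rightarrow> bool" where
  "proper_basis M mul pl st H \<longleftrightarrow> basis M mul pl st H \<and> proper M mul pl st H"

text \<open>T is the monoid type 't, X the semilattice-with-identity type 'x (a commutative
  idempotent monoid), act the left action. Elements of the semigroup free product T*X
  are represented by nonempty words over T + X.\<close>

type_synonym ('t, 'x) pword = "('t + 'x) list"

fun act_word :: "('t \<Rightarrow> 'x \<Rightarrow> 'x) \<Rightarrow> ('t, 'x::comm_monoid_mult) pword \<Rightarrow> 'x \<Rightarrow> 'x" where
  "act_word act [] y = y"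
| "act_word act (Inl t # w) y = act t (act_word act w y)"
| "act_word act (Inr e # w) y = e * act_word act w y"

text \<open>Generating pairs: the free product relations, (alpha^+ alpha, alpha), (1_T, 1_X).\<close>
inductive Pgen :: "('t::monoid_mult \<Rightarrow> 'x \<Rightarrow> 'x) \<Rightarrow> ('t, 'x::comm_monoid_mult) pword \<Rightarrow> ('t, 'x) pword \<Rightarrow> bool"
  for act where
  Tmul: "Pgen act [Inl s, Inl t] [Inl (s * t)]"
| Xmul: "Pgen act [Inr e, Inr f] [Inr (e * f)]"
| plus: "w \<noteq> [] \<Longrightarrow> Pgen act (Inr (act_word act w 1) # w) w"
| one: "Pgen act [Inl 1] [Inr 1]"

inductive Pcong :: "('t::monoid_mult \<Rightarrow> 'x \<Rightarrow> 'x) \<Rightarrow> ('t, 'x::comm_monoid_mult) pword \<Rightarrow> ('t, 'x) pword \<Rightarrow> bool"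
  for act where
  gen: "Pgen act u v \<Longrightarrow> Pcong act u v"
| refl: "w \<noteq> [] \<Longrightarrow> Pcong act w w"
| sym: "Pcong act u v \<Longrightarrow> Pcong act v u"
| trans: "Pcong act u v \<Longrightarrow> Pcong act v w \<Longrightarrow> Pcong act u w"
| ctxt: "Pcong act u v \<Longrightarrow> Pcong act (p @ u @ q) (p @ v @ q)"

definition pclass :: "('t::monoid_mult \<Rightarrow> 'x \<Rightarrow> 'x) \<Rightarrow> ('t, 'x::comm_monoid_mult) pword \<Rightarrow> ('t, 'x) pword set" where
  "pclass act w = {v. Pcong act w v}"

definition Pl :: "('t::monoid_mult \<Rightarrow> 'x \<Rightarrow> 'x) \<Rightarrow> ('t, 'x::comm_monoid_mult) pword set set" where
  "Pl act = {pclass act w | w. w \<noteq> []}"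

definition pmul :: "('t::monoid_mult \<Rightarrow> 'x \<Rightarrow> 'x) \<Rightarrow> ('t, 'x::comm_monoid_mult) pword set \<Rightarrow> ('t, 'x) pword set \<Rightarrow> ('t, 'x) pword set" where
  "pmul act A B = {w. \<exists>a\<in>A. \<exists>b\<in>B. Pcong act (a @ b) w}"

definition pplus :: "('t::monoid_mult \<Rightarrow> 'x \<Rightarrow> 'x) \<Rightarrow> ('t, 'x::comm_monoid_mult) pword set \<Rightarrow> ('t, 'x) pword set" where
  "pplus act A = {w. \<exists>a\<in>A. Pcong act [Inr (act_word act a 1)] w}"

definition embX :: "('t::monoid_mult \<Rightarrow> 'x \<Rightarrow> 'x) \<Rightarrow> 'x::comm_monoid_mult \<Rightarrow> ('t, 'x) pword set" where
  "embX act e = pclass act [Inr e]"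

definition embT :: "('t::monoid_mult \<Rightarrow> 'x \<Rightarrow> 'x) \<Rightarrow> 't \<Rightarrow> ('t, 'x::comm_monoid_mult) pword set" where
  "embT act t = pclass act [Inl t]"

text \<open>T-normal forms t0 e1 t1 ... en tn, given as t0 and the list [(e1,t1),...,(en,tn)].\<close>
definition nf_word :: "'t \<Rightarrow> ('x \<times> 't) list \<Rightarrow> ('t, 'x) pword" where
  "nf_word t0 ps = Inl t0 # concat (map (\<lambda>(e, t). [Inr e, Inl t]) ps)"

definition isNF :: "('t::monoid_mult \<Rightarrow> 'x \<Rightarrow> 'x) \<Rightarrow> 't \<Rightarrow> ('x::comm_monoid_mult \<times> 't) list \<Rightarrow> bool" where
  "isNF act t0 ps \<longleftrightarrow>
     (\<forall>i < length ps. fst (ps ! i) \<noteq> 1) \<and>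
     (\<forall>i. Suc i < length ps \<longrightarrow> snd (ps ! i) \<noteq> 1) \<and>
     (\<forall>i < length ps. sless (*) (fst (ps ! i))
        (act_word act (Inl (snd (ps ! i)) # concat (map (\<lambda>(e, t). [Inr e, Inl t]) (drop (Suc i) ps))) 1))"

definition pstar :: "('t::monoid_mult \<Rightarrow> 'x \<Rightarrow> 'x) \<Rightarrow> ('t, 'x::comm_monoid_mult) pword set \<Rightarrow> ('t, 'x) pword set" where
  "pstar act a = embX act (THE e. \<exists>t0 ps. isNF act t0 ps \<and> pclass act (nf_word t0 ps) = a \<and>
       e = (if ps \<noteq> [] \<and> snd (last ps) = 1 then fst (last ps) else 1))"

definition HQ :: "('t::monoid_mult \<Rightarrow> 'x \<Rightarrow> 'x) \<Rightarrow> 'x::comm_monoid_mult set \<Rightarrow> ('t, 'x) pword set set" where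
  "HQ act Y = {pmul act (embT act t) (embX act e) | t e. e \<in> Y \<and> act t e \<in> Y}"

definition Ql :: "('t::monoid_mult \<Rightarrow> 'x \<Rightarrow> 'x) \<Rightarrow> 'x::comm_monoid_mult set \<Rightarrow> ('t, 'x) pword set set" where
  "Ql act Y = sg_gen (pmul act) (HQ act Y)"

end

(*
  Equality in P_l(T,X) is decided by T-normal forms: letting the letters of a word act one
  by one, from the right, on normal forms yields a normal form that is invariant under every
  generating relation and congruent to the word, so two words are congruent iff their normal
  forms coincide. This gives explicit formulas for + and *.

  An element of Q_l(T,X,Y) is a product of atoms t e (e, t.e in Y); multiplying a canonical
  chain t_1 e_1 ... t_n e_n (e_i < t_(i+1).e_(i+1), t_(i+1) <> 1) on the left by an atom
  gives again a canonical chain, by condition (A) and the closure of Y, and a canonical chain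
  can be read off from its normal form. Hence every element has a unique H^Q-canonical form,
  with + the + of its first atom and * the X-part of its last one. Modulo sigma an atom is
  determined by its T-component, while condition (B) supplies a common lower bound that
  merges two adjacent atoms into one; this yields (H4), (H5) and properness.
*)

theory Submission
  imports Defs
begin

lemma all_less_Cons: "(\<forall>i<length (x # xs). P i) \<longleftrightarrow> P 0 \<and> (\<forall>i<length xs. P (Suc i))"
  by (simp add: All_less_Suc2)

lemma all_Suc_less_Cons:
  "(\<forall>i. Suc i < length (x # xs) \<longrightarrow> P i) \<longleftrightarrow> (xs \<noteq> [] \<longrightarrow> P 0) \<and> (\<forall>i. Suc i < length xs \<longrightarrow> P (Suc i))"
  by (cases xs) (auto simp: less_Suc_eq_0_disj)

lemma all_pos_less_iff: "(\<forall>i. 0 < i \<and> i < n \<longrightarrow> P i) \<longleftrightarrow> (\<forall>i. Suc i < n \<longrightarrow> P (Suc i))"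
  by (auto simp: gr0_conv_Suc)

section \<open>The defining congruence of \<open>P\<^sub>\<ell>(T,X)\<close>\<close>

declare Pcong.trans[trans]

lemma Pcong_append_right: "Pcong act u v \<Longrightarrow> Pcong act (u @ q) (v @ q)"
  using Pcong.ctxt[of act u v "[]" q] by simp

lemma Pcong_append_left: "Pcong act u v \<Longrightarrow> Pcong act (p @ u) (p @ v)"
  using Pcong.ctxt[of act u v p "[]"] by simp

lemma Pcong_Cons: "Pcong act u v \<Longrightarrow> Pcong act (a # u) (a # v)"
  using Pcong_append_left[of act u v "[a]"] by simp

lemma Pcong_Inr_Inr: "Pcong act (Inr e # Inr f # w) (Inr (e * f) # w)"
  using Pcong_append_right[OF Pcong.gen[OF Pgen.Xmul], of act e f w] by simp

lemma Pcong_Inl_Inl: "Pcong act (Inl s # Inl t # w) (Inl (s * t) # w)"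
  using Pcong_append_right[OF Pcong.gen[OF Pgen.Tmul], of act s t w] by simp

lemma Pcong_plus: "w \<noteq> [] \<Longrightarrow> Pcong act (Inr (act_word act w 1) # w) w"
  by (rule Pcong.gen[OF Pgen.plus])

lemma Pcong_Inr_times_plus: "w \<noteq> [] \<Longrightarrow> Pcong act (Inr e # w) (Inr (e * act_word act w 1) # w)"
proof -
  assume "w \<noteq> []"
  then have "Pcong act (Inr e # w) (Inr e # Inr (act_word act w 1) # w)"
    using Pcong_Cons[OF Pcong_plus, of w act "Inr e"] by (simp add: Pcong.sym)
  also have "Pcong act \<dots> (Inr (e * act_word act w 1) # w)" by (rule Pcong_Inr_Inr)
  finally show ?thesis .
qed

lemma Pcong_Inl_one: "Pcong act (Inl 1 # w) (Inr 1 # w)"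
  using Pcong_append_right[OF Pcong.gen[OF Pgen.one], of act w] by simp

lemma Pcong_insert_Inl_one: "Pcong act (Inr e # w) (Inl 1 # Inr e # w)"
proof -
  have "Pcong act (Inr e # w) (Inr 1 # Inr e # w)"
    using Pcong.sym[OF Pcong_Inr_Inr[of act 1 e w]] by simp
  also have "Pcong act \<dots> (Inl 1 # Inr e # w)" by (rule Pcong.sym[OF Pcong_Inl_one])
  finally show ?thesis .
qed

lemma Pcong_Inr_Inl_one: "Pcong act (Inr e # Inl 1 # w) (Inl 1 # Inr e # w)"
proof -
  have "Pcong act (Inr e # Inl 1 # w) (Inr e # Inr 1 # w)" by (rule Pcong_Cons[OF Pcong_Inl_one])
  also have "Pcong act \<dots> (Inr e # w)" using Pcong_Inr_Inr[of act e 1 w] by simp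
  also have "Pcong act \<dots> (Inl 1 # Inr e # w)" by (rule Pcong_insert_Inl_one)
  finally show ?thesis .
qed

lemma pclass_eqI: "Pcong act u v \<Longrightarrow> pclass act u = pclass act v"
  unfolding pclass_def by (auto intro: Pcong.trans Pcong.sym)

lemma mem_pclass_self: "u \<noteq> [] \<Longrightarrow> u \<in> pclass act u"
  unfolding pclass_def by (auto intro: Pcong.refl)

lemma pmul_pclass:
  assumes "u \<noteq> []" "v \<noteq> []"
  shows "pmul act (pclass act u) (pclass act v) = pclass act (u @ v)"
  unfolding pmul_def pclass_def
proof (intro set_eqI iffI; clarsimp)
  fix a b w assume "Pcong act u a" "Pcong act v b" "Pcong act (a @ b) w"
  have "Pcong act (u @ v) (a @ v)" by (rule Pcong_append_right) fact
  also have "Pcong act \<dots> (a @ b)" by (rule Pcong_append_left) fact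
  also have "Pcong act \<dots> w" by fact
  finally show "Pcong act (u @ v) w" .
next
  fix w assume "Pcong act (u @ v) w"
  then show "\<exists>a. Pcong act u a \<and> (\<exists>b. Pcong act v b \<and> Pcong act (a @ b) w)"
    using assms by (auto intro: Pcong.refl)
qed

lemma act_word_append: "act_word act (u @ v) x = act_word act u (act_word act v x)"
proof (induction u)
  case (Cons a u) then show ?case by (cases a) auto
qed simp

lemma nf_word_Nil: "nf_word t0 [] = [Inl t0]"
  by (simp add: nf_word_def)

lemma nf_word_Cons: "nf_word t0 ((e, t) # ps) = Inl t0 # Inr e # nf_word t ps"
  by (simp add: nf_word_def)

lemma nf_word_nonempty: "nf_word t0 ps \<noteq> []"
  by (simp add: nf_word_def)

fun projT :: "('t::monoid_mult, 'x) pword \<Rightarrow> 't" where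
  "projT [] = 1"
| "projT (Inl t # w) = t * projT w"
| "projT (Inr e # w) = projT w"

lemma projT_append: "projT (u @ v) = projT u * projT v"
proof (induction u)
  case (Cons a u) then show ?case by (cases a) (auto simp: mult.assoc)
qed simp

lemma Pcong_projT: "Pcong act u v \<Longrightarrow> projT u = projT v"
proof (induction rule: Pcong.induct)
  case (gen u v) then show ?case by (induction rule: Pgen.induct) (auto simp: mult.assoc)
next
  case (ctxt u v p q) then show ?case by (simp add: projT_append)
qed auto

definition class_projT :: "('t::monoid_mult, 'x) pword set \<Rightarrow> 't" where
  "class_projT a = projT (SOME w. w \<in> a)"

lemma class_projT_pclass: "u \<noteq> [] \<Longrightarrow> class_projT (pclass act u) = projT u"
proof -
  assume "u \<noteq> []"
  then have "(SOME w. w \<in> pclass act u) \<in> pclass act u" using mem_pclass_self by (metis someI)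
  then show ?thesis unfolding class_projT_def pclass_def using Pcong_projT by fastforce
qed

section \<open>Normal forms in \<open>P\<^sub>\<ell>(T,X)\<close>\<close>

text \<open>A normal form \<open>t\<^sub>0 e\<^sub>1 t\<^sub>1 \<dots> e\<^sub>n t\<^sub>n\<close> is stored as the pair \<open>(t\<^sub>0, [(e\<^sub>1,t\<^sub>1), \<dots>, (e\<^sub>n,t\<^sub>n)])\<close>;
  \<open>nf_plus\<close> is its \<open>+\<close>, i.e. the action of the normal form word on \<open>1\<close>.\<close>

type_synonym ('t, 'x) nform = "'t \<times> ('x \<times> 't) list"

fun nf_plus :: "('t::monoid_mult \<Rightarrow> 'x::comm_monoid_mult \<Rightarrow> 'x) \<Rightarrow> ('t, 'x) nform \<Rightarrow> 'x" where
  "nf_plus act (t0, []) = act t0 1"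
| "nf_plus act (t0, (e, t) # ps) = act t0 (e * nf_plus act (t, ps))"

definition nform_word :: "('t, 'x) nform \<Rightarrow> ('t, 'x) pword" where
  "nform_word N = nf_word (fst N) (snd N)"

definition strip_unit :: "('t::monoid_mult, 'x) nform \<Rightarrow> ('t, 'x) nform" where
  "strip_unit N = (if fst N = 1 \<and> snd N \<noteq> [] then (snd (hd (snd N)), tl (snd N)) else N)"

text \<open>A letter \<open>e\<close> of \<open>X\<close> is first
  replaced by \<open>e f\<close>, \<open>f\<close> the \<open>+\<close> of the normal form; it disappears if \<open>e f = f\<close>, and
  otherwise it absorbs a leading \<open>1 e\<^sub>1\<close> (as \<open>e f \<le> e\<^sub>1 = f\<close> then).\<close>

fun nf_step :: "('t::monoid_mult \<Rightarrow> 'x::comm_monoid_mult \<Rightarrow> 'x) \<Rightarrow> 't + 'x \<Rightarrow> ('t, 'x) nform \<Rightarrow> ('t, 'x) nform" where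
  "nf_step act (Inl s) (t0, ps) = (s * t0, ps)"
| "nf_step act (Inr e) N =
    (if e * nf_plus act N = nf_plus act N then N
     else (1, (e * nf_plus act N, fst (strip_unit N)) # snd (strip_unit N)))"

definition nf :: "('t::monoid_mult \<Rightarrow> 'x::comm_monoid_mult \<Rightarrow> 'x) \<Rightarrow> ('t, 'x) pword \<Rightarrow> ('t, 'x) nform" where
  "nf act w = foldr (nf_step act) w (1, [])"

lemma nf_Nil[simp]: "nf act [] = (1, [])"
  by (simp add: nf_def)

lemma nf_Cons[simp]: "nf act (a # w) = nf_step act a (nf act w)"
  by (simp add: nf_def)

lemma nf_step_Inl_one [simp]: "nf_step act (Inl 1) N = N"
  by (cases N) simp

lemma nf_append: "nf act (u @ w) = foldr (nf_step act) u (nf act w)"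
  by (simp add: nf_def)

fun is_nf_list :: "('t::monoid_mult \<Rightarrow> 'x::comm_monoid_mult \<Rightarrow> 'x) \<Rightarrow> ('x \<times> 't) list \<Rightarrow> bool" where
  "is_nf_list act [] = True"
| "is_nf_list act ((e, t) # ps) \<longleftrightarrow>
     e \<noteq> 1 \<and> (ps \<noteq> [] \<longrightarrow> t \<noteq> 1) \<and> sless (*) e (nf_plus act (t, ps)) \<and> is_nf_list act ps"

definition nf_star :: "('t::monoid_mult, 'x::comm_monoid_mult) nform \<Rightarrow> 'x" where
  "nf_star N = (if snd N \<noteq> [] \<and> snd (last (snd N)) = 1 then fst (last (snd N)) else 1)"

lemma nf_star_Cons: "ps \<noteq> [] \<Longrightarrow> nf_star (t, p # ps) = nf_star (t', ps)"
  by (simp add: nf_star_def)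

lemma act_word_nf_word: "act_word act (nf_word t ps) 1 = nf_plus act (t, ps)"
  by (induction ps arbitrary: t) (auto simp: nf_word_Cons nf_word_Nil)

lemma strip_unit_Cons: "strip_unit (1, (e, t) # ps) = (t, ps)"
  by (simp add: strip_unit_def)

lemma strip_unit_id: "fst N \<noteq> 1 \<or> snd N = [] \<Longrightarrow> strip_unit N = N"
  by (auto simp: strip_unit_def)

lemma nf_step_Inr_absorbed: "e * nf_plus act N = nf_plus act N \<Longrightarrow> nf_step act (Inr e) N = N"
  by simp

lemma nf_step_Inr_new:
  "e * nf_plus act N \<noteq> nf_plus act N \<Longrightarrow>
     nf_step act (Inr e) N = (1, (e * nf_plus act N, fst (strip_unit N)) # snd (strip_unit N))"
  by simp

declare nf_step.simps(2)[simp del]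

locale semilattice_action =
  fixes act :: "'t::monoid_mult \<Rightarrow> 'x::comm_monoid_mult \<Rightarrow> 'x"
  assumes idem: "\<And>e::'x. e * e = e"
    and act_one: "\<And>x. act 1 x = x"
    and act_mult: "\<And>s t x. act (s * t) x = act s (act t x)"
    and act_mono: "\<And>t e f. e * f = e \<Longrightarrow> act t e * act t f = act t e"
begin

lemma idem_left: "(e::'x) * (e * f) = e * f"
  by (metis idem mult.assoc)

lemmas semilattice_simps = idem idem_left mult.assoc mult.commute mult.left_commute

lemma below_product_neq:
  fixes e f g :: 'x
  assumes "e * f \<noteq> f"
  shows "e * f \<noteq> 1" and "g * f = f \<Longrightarrow> e * f \<noteq> g"
proof -
  show "e * f \<noteq> 1"
  proof
    assume "e * f = 1"
    then have "f = f * (e * f)" by simp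
    also have "\<dots> = e * f" by (simp add: semilattice_simps)
    finally show False using assms by simp
  qed
  show "e * f \<noteq> g" if "g * f = f"
  proof
    assume "e * f = g"
    then have "f = e * f * f" using that by simp
    also have "\<dots> = e * f" by (simp add: semilattice_simps)
    finally show False using assms by simp
  qed
qed

lemma act_word_mono: "x * y = x \<Longrightarrow> act_word act w x * act_word act w y = act_word act w x"
proof (induction w)
  case (Cons a w) then show ?case by (cases a) (auto intro: act_mono simp: semilattice_simps)
qed simp

lemma nf_plus_nf_step: "nf_plus act (nf_step act a N) = act_word act [a] (nf_plus act N)"
proof (cases a)
  case (Inl s)
  then show ?thesis by (cases N; cases "snd N") (auto simp: act_mult)
next
  case (Inr e)
  obtain t0 ps where N: "N = (t0, ps)" by (cases N)
  show ?thesis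
  proof (cases "t0 = 1 \<and> ps \<noteq> []")
    case True
    then obtain e1 t1 ps' where "ps = (e1, t1) # ps'" "t0 = 1" by (cases ps) auto
    then show ?thesis
      using Inr N by (simp add: nf_step.simps(2) strip_unit_def act_one semilattice_simps)
  next
    case False
    then show ?thesis
      using Inr N by (auto simp: nf_step.simps(2) strip_unit_def act_one semilattice_simps)
  qed
qed

lemma act_word_eq_nf_plus: "act_word act w 1 = nf_plus act (nf act w)"
proof (induction w)
  case Nil then show ?case by (simp add: act_one)
next
  case (Cons a w)
  then show ?case using act_word_append[of act "[a]" w 1] by (simp add: nf_plus_nf_step)
qed

lemma nf_step_Inr_times_nf_plus: "nf_step act (Inr (e * nf_plus act N)) N = nf_step act (Inr e) N"
  by (simp add: nf_step.simps(2) semilattice_simps)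

lemma nf_step_Inr_Inr: "nf_step act (Inr e) (nf_step act (Inr f) N) = nf_step act (Inr (e * f)) N"
proof -
  define g where "g = nf_plus act N"
  show ?thesis
  proof (cases "f * g = g")
    case True
    have "nf_step act (Inr (e * f)) N = nf_step act (Inr (e * f * g)) N"
      using nf_step_Inr_times_nf_plus[of "e * f" N] by (simp add: g_def)
    also have "e * f * g = e * g" using True by (simp add: mult.assoc)
    also have "nf_step act (Inr (e * g)) N = nf_step act (Inr e) N"
      by (simp add: g_def nf_step_Inr_times_nf_plus)
    finally show ?thesis using True by (simp add: g_def nf_step_Inr_absorbed)
  next
    case False
    define S where "S = strip_unit N"
    have fN: "nf_step act (Inr f) N = (1, (f * g, fst S) # snd S)"
      using False by (simp add: g_def S_def nf_step_Inr_new)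
    have plus_fN: "nf_plus act (nf_step act (Inr f) N) = f * g"
      using nf_plus_nf_step[of "Inr f" N] by (simp add: g_def)
    show ?thesis
    proof (cases "e * (f * g) = f * g")
      case True
      then have "e * f * g \<noteq> g" using False by (simp add: mult.assoc)
      then have "nf_step act (Inr (e * f)) N = (1, (e * f * g, fst S) # snd S)"
        by (simp add: g_def S_def nf_step_Inr_new)
      then show ?thesis using True plus_fN fN by (simp add: nf_step_Inr_absorbed mult.assoc)
    next
      case False2: False
      have "e * f * g \<noteq> g"
        using below_product_neq(2)[of e "f * g" g] False2 by (simp add: semilattice_simps)
      then have "nf_step act (Inr (e * f)) N = (1, (e * f * g, fst S) # snd S)"
        by (simp add: g_def S_def nf_step_Inr_new)
      moreover have "nf_step act (Inr e) (nf_step act (Inr f) N) = (1, (e * (f * g), fst S) # snd S)"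
        using False2 plus_fN fN by (simp add: nf_step_Inr_new strip_unit_Cons)
      ultimately show ?thesis by (simp add: mult.assoc)
    qed
  qed
qed

lemma nf_append_Pgen: "Pgen act u v \<Longrightarrow> nf act (u @ q) = nf act (v @ q)"
proof (induction rule: Pgen.induct)
  case (Tmul s t) then show ?case by (cases "nf act q") (simp add: mult.assoc)
next
  case (Xmul e f) then show ?case by (simp add: nf_step_Inr_Inr)
next
  case (plus w)
  define N where "N = nf act (w @ q)"
  have "nf_plus act N = act_word act w (act_word act q 1)"
    by (simp add: N_def act_word_eq_nf_plus[symmetric] act_word_append)
  then have "act_word act w 1 * nf_plus act N = nf_plus act N"
    using act_word_mono[of "act_word act q 1" 1 w] by (simp add: mult.commute)
  then show ?case by (simp add: N_def[symmetric] nf_step_Inr_absorbed)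
next
  case one then show ?case by (cases "nf act q") (simp add: nf_step_Inr_absorbed)
qed

lemma nf_append_Pcong: "Pcong act u v \<Longrightarrow> nf act (u @ q) = nf act (v @ q)"
proof (induction arbitrary: q rule: Pcong.induct)
  case (gen u v) then show ?case by (rule nf_append_Pgen)
next
  case (ctxt u v p q') then show ?case by (simp add: nf_append[of act p])
qed auto

lemma Pcong_nf_step_Inr: "Pcong act (Inr e # nform_word N) (nform_word (nf_step act (Inr e) N))"
proof -
  obtain t0 ps where N: "N = (t0, ps)" by (cases N)
  define w where "w = nf_word t0 ps"
  define f where "f = nf_plus act N"
  have w: "w \<noteq> []" "act_word act w 1 = f"
    by (simp_all add: w_def f_def N nf_word_nonempty act_word_nf_word)
  then have times_f: "Pcong act (Inr e # w) (Inr (e * f) # w)" using Pcong_Inr_times_plus by metis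
  show ?thesis
  proof (cases "e * f = f")
    case True
    then have "Pcong act (Inr e # w) w" using times_f Pcong_plus[OF w(1)] w(2) by (metis Pcong.trans)
    then show ?thesis using True N by (simp add: nform_word_def w_def f_def nf_step_Inr_absorbed)
  next
    case False
    show ?thesis
    proof (cases "t0 = 1 \<and> ps \<noteq> []")
      case True
      then obtain e1 t1 ps' where ps: "ps = (e1, t1) # ps'" and t0: "t0 = 1" by (cases ps) auto
      define r where "r = nf_word t1 ps'"
      have w_r: "w = Inl 1 # Inr e1 # r" using ps t0 by (simp add: w_def r_def nf_word_Cons)
      have "e * f * e1 = e * f" using ps t0 by (simp add: f_def N act_one semilattice_simps)
      then have "Pcong act (Inr (e * f) # w) (Inl 1 # Inr (e * f) # r)"
        using w_r Pcong_Inr_Inl_one Pcong_Cons[OF Pcong_Inr_Inr] by (metis Pcong.trans)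
      then have "Pcong act (Inr e # w) (Inl 1 # Inr (e * f) # r)" using times_f by (metis Pcong.trans)
      then show ?thesis
        using False N ps t0 by (simp add: nform_word_def w_def f_def r_def nf_word_Cons
            nf_step_Inr_new strip_unit_Cons)
    next
      case False2: False
      have "Pcong act (Inr e # w) (Inl 1 # Inr (e * f) # w)"
        using times_f Pcong_insert_Inl_one by (rule Pcong.trans)
      then show ?thesis using False False2 N
        by (simp add: nform_word_def w_def f_def nf_word_Cons nf_step_Inr_new strip_unit_id)
    qed
  qed
qed

lemma Pcong_nf_step: "Pcong act (a # nform_word N) (nform_word (nf_step act a N))"
proof (cases a)
  case (Inl s)
  then show ?thesis using Pcong_Inl_Inl[of act s "fst N"] by (cases N) (simp add: nform_word_def nf_word_def)
next
  case (Inr e)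
  then show ?thesis by (simp add: Pcong_nf_step_Inr)
qed

lemma Pcong_nform_word_nf: "w \<noteq> [] \<Longrightarrow> Pcong act w (nform_word (nf act w))"
proof (induction w)
  case (Cons a w)
  have "Pcong act (a # w) (a # nform_word (nf act w))"
  proof (cases "w = []")
    case True
    show ?thesis
    proof (cases a)
      case (Inl s)
      then show ?thesis using True Pcong.sym[OF Pcong_Inl_Inl[of act s 1 "[]"]]
        by (simp add: nform_word_def nf_word_Nil)
    next
      case (Inr e)
      have "Pcong act [Inr e] [Inr e, Inr 1]" using Pcong.sym[OF Pcong_Inr_Inr[of act e 1 "[]"]] by simp
      also have "Pcong act \<dots> [Inr e, Inl 1]" by (rule Pcong_Cons[OF Pcong.sym[OF Pcong_Inl_one]])
      finally show ?thesis using Inr True by (simp add: nform_word_def nf_word_Nil)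
    qed
  next
    case False
    then show ?thesis using Cons.IH by (simp add: Pcong_Cons)
  qed
  also have "Pcong act \<dots> (nform_word (nf act (a # w)))" using Pcong_nf_step by simp
  finally show ?case .
qed simp

lemma Pcong_iff_nf_eq: "u \<noteq> [] \<Longrightarrow> v \<noteq> [] \<Longrightarrow> Pcong act u v \<longleftrightarrow> nf act u = nf act v"
  using nf_append_Pcong[of u v "[]"] Pcong_nform_word_nf[of u] Pcong_nform_word_nf[of v]
  by (metis Pcong.sym Pcong.trans append_Nil2)

lemma pclass_eq_iff_nf_eq: "u \<noteq> [] \<Longrightarrow> v \<noteq> [] \<Longrightarrow> pclass act u = pclass act v \<longleftrightarrow> nf act u = nf act v"
  by (metis Pcong_iff_nf_eq mem_Collect_eq mem_pclass_self pclass_def pclass_eqI)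

lemma strip_unit_is_nf_list:
  assumes "is_nf_list act (snd N)"
  shows "is_nf_list act (snd (strip_unit N))"
    and "snd (strip_unit N) \<noteq> [] \<Longrightarrow> fst (strip_unit N) \<noteq> 1"
    and "nf_plus act N * nf_plus act (strip_unit N) = nf_plus act N"
proof -
  have "is_nf_list act (snd (strip_unit N)) \<and> (snd (strip_unit N) \<noteq> [] \<longrightarrow> fst (strip_unit N) \<noteq> 1) \<and>
    nf_plus act N * nf_plus act (strip_unit N) = nf_plus act N"
  proof (cases "fst N = 1 \<and> snd N \<noteq> []")
    case True
    then obtain e1 t1 ps where N: "N = (1, (e1, t1) # ps)" by (cases N; cases "snd N") auto
    then show ?thesis using assms by (simp add: strip_unit_Cons act_one sless_def sle_def semilattice_simps)
  next
    case False
    then show ?thesis using assms by (auto simp: strip_unit_def idem)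
  qed
  then show "is_nf_list act (snd (strip_unit N))"
    and "snd (strip_unit N) \<noteq> [] \<Longrightarrow> fst (strip_unit N) \<noteq> 1"
    and "nf_plus act N * nf_plus act (strip_unit N) = nf_plus act N" by auto
qed

lemma is_nf_list_nf_step:
  assumes "is_nf_list act (snd N)"
  shows "is_nf_list act (snd (nf_step act a N))"
proof (cases a)
  case (Inl s) then show ?thesis using assms by (cases N) simp
next
  case (Inr e)
  define f where "f = nf_plus act N"
  define p where "p = nf_plus act (strip_unit N)"
  show ?thesis
  proof (cases "e * f = f")
    case True then show ?thesis using assms Inr by (simp add: f_def nf_step_Inr_absorbed)
  next
    case False
    have fp: "p * f = f" using strip_unit_is_nf_list(3)[OF assms] by (simp add: f_def p_def mult.commute)
    have "e * f \<noteq> 1" "e * f \<noteq> p" using below_product_neq[OF False] fp by auto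
    moreover have "e * f * p = e * f" using fp by (simp add: semilattice_simps)
    moreover obtain t1 ps where "strip_unit N = (t1, ps)" by (cases "strip_unit N")
    ultimately show ?thesis using False Inr strip_unit_is_nf_list(1,2)[OF assms]
      by (simp add: nf_step_Inr_new f_def p_def sless_def sle_def)
  qed
qed

lemma is_nf_list_nf: "is_nf_list act (snd (nf act w))"
  by (induction w) (simp_all add: is_nf_list_nf_step)

lemma nf_nf_word: "is_nf_list act ps \<Longrightarrow> nf act (nf_word t0 ps) = (t0, ps)"
proof (induction ps arbitrary: t0)
  case Nil then show ?case by (simp add: nf_word_Nil)
next
  case (Cons p ps)
  obtain e t where p: "p = (e, t)" by (cases p)
  have "nf_step act (Inr e) (t, ps) = (1, (e, t) # ps)"
    using Cons.prems p by (auto simp: nf_step_Inr_new strip_unit_def sless_def sle_def)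
  then show ?case using Cons p by (simp add: nf_word_Cons)
qed

lemma isNF_iff_is_nf_list: "isNF act t0 ps \<longleftrightarrow> is_nf_list act ps"
proof (induction ps arbitrary: t0)
  case Nil then show ?case by (simp add: isNF_def)
next
  case (Cons p ps)
  obtain e t where p: "p = (e, t)" by (cases p)
  have "isNF act t0 (p # ps) \<longleftrightarrow>
      (e \<noteq> 1 \<and> (ps \<noteq> [] \<longrightarrow> t \<noteq> 1) \<and> sless (*) e (nf_plus act (t, ps))) \<and> isNF act t ps"
    using act_word_nf_word[of act t ps] p
    unfolding isNF_def all_less_Cons all_Suc_less_Cons by (auto simp: nf_word_def simp del: act_word.simps)
  then show ?case using Cons.IH p by simp
qed

lemma pstar_pclass:
  assumes "u \<noteq> []"
  shows "pstar act (pclass act u) = embX act (nf_star (nf act u))"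
proof -
  obtain t0 ps where N: "nf act u = (t0, ps)" by (cases "nf act u")
  let ?star = "\<lambda>ps. if ps \<noteq> [] \<and> snd (last ps) = 1 then fst (last ps) else 1"
  have "(THE e. \<exists>t0 ps. isNF act t0 ps \<and> pclass act (nf_word t0 ps) = pclass act u \<and> e = ?star ps)
      = nf_star (nf act u)"
  proof (rule the_equality)
    have "pclass act (nf_word t0 ps) = pclass act u"
      using Pcong_nform_word_nf[OF assms] N by (simp add: nform_word_def pclass_eqI Pcong.sym)
    moreover have "isNF act t0 ps" using is_nf_list_nf[of u] N by (simp add: isNF_iff_is_nf_list)
    ultimately show "\<exists>t0 ps. isNF act t0 ps \<and> pclass act (nf_word t0 ps) = pclass act u \<and>
        nf_star (nf act u) = ?star ps"
      using N unfolding nf_star_def by (intro exI[of _ t0] exI[of _ ps]) simp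
  next
    fix e assume "\<exists>t1 ps1. isNF act t1 ps1 \<and> pclass act (nf_word t1 ps1) = pclass act u \<and> e = ?star ps1"
    then obtain t1 ps1 where nf1: "isNF act t1 ps1" "pclass act (nf_word t1 ps1) = pclass act u"
      and e: "e = ?star ps1" by blast
    have "nf act (nf_word t1 ps1) = nf act u"
      using nf1(2) assms nf_word_nonempty[of t1 ps1] pclass_eq_iff_nf_eq[of "nf_word t1 ps1" u] by simp
    then have "(t1, ps1) = nf act u" using nf1(1) nf_nf_word by (simp add: isNF_iff_is_nf_list)
    then have "ps1 = snd (nf act u)" by (metis snd_conv)
    then show "e = nf_star (nf act u)" using e by (simp add: nf_star_def)
  qed
  then show ?thesis by (simp add: pstar_def)
qed

lemma pplus_pclass:
  assumes "u \<noteq> []"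
  shows "pplus act (pclass act u) = pclass act [Inr (act_word act u 1)]"
proof -
  have "act_word act a 1 = act_word act u 1" if "a \<in> pclass act u" for a
    using that nf_append_Pcong[of u a "[]"] by (simp add: pclass_def act_word_eq_nf_plus)
  then have "(\<exists>a\<in>pclass act u. Pcong act [Inr (act_word act a 1)] w) \<longleftrightarrow>
      Pcong act [Inr (act_word act u 1)] w" for w
    using mem_pclass_self[OF assms] by metis
  then show ?thesis unfolding pplus_def pclass_def by simp
qed

lemma nf_Inr: "nf act [Inr e] = (if e = 1 then (1, []) else (1, [(e, 1)]))"
  by (simp add: act_one nf_step.simps(2) strip_unit_def)

lemma embX_inj: "embX act e = embX act f \<Longrightarrow> e = f"
  unfolding embX_def using pclass_eq_iff_nf_eq[of "[Inr e]" "[Inr f]"]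
  by (simp add: nf_Inr split: if_splits del: nf_Cons)

lemma pmul_embX_embX: "pmul act (embX act e) (embX act f) = embX act (e * f)"
  unfolding embX_def
  using pmul_pclass[of "[Inr e]" "[Inr f]" act] pclass_eqI[OF Pcong.gen[OF Pgen.Xmul]] by simp

lemma embX_sle_iff: "sle (pmul act) (embX act e) (embX act f) \<longleftrightarrow> sle (*) e f"
  unfolding sle_def pmul_embX_embX by (metis embX_inj)

lemma embX_sless_iff: "sless (pmul act) (embX act e) (embX act f) \<longleftrightarrow> sless (*) e f"
  unfolding sless_def embX_sle_iff by (metis embX_inj)

lemma pstar_embX: "pstar act (embX act e) = embX act e"
  using pstar_pclass[of "[Inr e]"] by (simp add: embX_def nf_Inr nf_star_def del: nf_Cons)

lemma pplus_embX: "pplus act (embX act e) = embX act e"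
  using pplus_pclass[of "[Inr e]"] by (simp add: embX_def)

text \<open>The invariant of the computation of \<open>nf act (w @ [Inr g])\<close>: the \<open>*\<close> of the
  normal form, its last \<open>e\<close> when it ends in \<open>e 1\<close>, stays below \<open>g\<close>.\<close>

definition star_below :: "'x \<Rightarrow> ('t, 'x) nform \<Rightarrow> bool" where
  "star_below g N \<longleftrightarrow> g = 1 \<or> (\<exists>ps e. snd N = ps @ [(e, 1)] \<and> e * g = e)"

lemma star_below_nf_step:
  assumes "star_below g N"
  shows "star_below g (nf_step act a N)"
proof (cases "g = 1 \<or> (\<exists>s. a = Inl s) \<or> (\<exists>e. a = Inr e \<and> e * nf_plus act N = nf_plus act N)")
  case True
  then show ?thesis using assms by (cases N) (auto simp: star_below_def nf_step_Inr_absorbed)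
next
  case False
  then obtain e where a: "a = Inr e" and new: "e * nf_plus act N \<noteq> nf_plus act N" and "g \<noteq> 1"
    by (cases a) auto
  then obtain ps e' where last: "snd N = ps @ [(e', 1)]" and e'g: "e' * g = e'"
    using assms by (auto simp: star_below_def)
  show ?thesis
  proof (cases "fst N = 1 \<and> ps = []")
    case True
    then have "N = (1, [(e', 1)])" using last by (cases N) simp
    then show ?thesis using a new e'g by (simp add: star_below_def nf_step_Inr_new strip_unit_Cons
        act_one mult.assoc)
  next
    case False
    have "\<exists>ps'. snd (strip_unit N) = ps' @ [(e', 1)]"
      using False last by (cases ps) (auto simp: strip_unit_def)
    then show ?thesis using a new e'g by (auto simp: star_below_def nf_step_Inr_new)
  qed
qed

lemma nf_star_append_Inr: "nf_star (nf act (w @ [Inr g])) * g = nf_star (nf act (w @ [Inr g]))"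
proof -
  have "star_below g (nf act [Inr g])" by (simp add: nf_Inr star_below_def idem del: nf_Cons)
  then have "star_below g (nf act (w @ [Inr g]))"
    by (induction w) (simp_all add: star_below_nf_step)
  then show ?thesis by (auto simp: star_below_def nf_star_def)
qed

end

section \<open>Chains of atoms\<close>

text \<open>A chain \<open>[(t\<^sub>1,e\<^sub>1), \<dots>, (t\<^sub>n,e\<^sub>n)]\<close> stands for the product of atoms
  \<open>t\<^sub>1 e\<^sub>1 \<cdots> t\<^sub>n e\<^sub>n\<close>; it is canonical when these atoms form an \<open>H\<^sup>\<Q>\<close>-canonical form.\<close>

definition atom :: "('t::monoid_mult \<Rightarrow> 'x::comm_monoid_mult \<Rightarrow> 'x) \<Rightarrow> 't \<Rightarrow> 'x \<Rightarrow> ('t, 'x) pword set" where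
  "atom act t e = pclass act [Inl t, Inr e]"

definition chain_word :: "('t \<times> 'x) list \<Rightarrow> ('t, 'x) pword" where
  "chain_word cs = concat (map (\<lambda>(t, e). [Inl t, Inr e]) cs)"

fun canonical_chain :: "('t::monoid_mult \<Rightarrow> 'x::comm_monoid_mult \<Rightarrow> 'x) \<Rightarrow> ('t \<times> 'x) list \<Rightarrow> bool" where
  "canonical_chain act [] \<longleftrightarrow> False"
| "canonical_chain act [(t, e)] \<longleftrightarrow> True"
| "canonical_chain act ((t, e) # (t', e') # cs) \<longleftrightarrow>
     sless (*) e (act t' e') \<and> t' \<noteq> 1 \<and> canonical_chain act ((t', e') # cs)"

text \<open>The normal form of a canonical chain \<open>(t\<^sub>1,e\<^sub>1) \<dots> (t\<^sub>n,e\<^sub>n)\<close> is \<open>t\<^sub>1 e\<^sub>1 t\<^sub>2 \<cdots> e\<^sub>n 1\<close>,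
  with the final \<open>e\<^sub>n 1\<close> omitted when \<open>e\<^sub>n = 1\<close>.\<close>

fun chain_nf_list :: "('t::monoid_mult \<times> 'x::comm_monoid_mult) list \<Rightarrow> ('x \<times> 't) list" where
  "chain_nf_list [] = []"
| "chain_nf_list [(t, e)] = (if e = 1 then [] else [(e, 1)])"
| "chain_nf_list ((t, e) # (t', e') # cs) = (e, t') # chain_nf_list ((t', e') # cs)"

text \<open>Left multiplication of a canonical chain by an atom \<open>t e\<close>, with \<open>f = t\<^sub>2 \<cdot> e\<^sub>2\<close>
  the \<open>+\<close> of the chain: the atom is swallowed if \<open>e \<ge> f\<close>, merged with a leading atom
  \<open>1 e\<^sub>2\<close>, and prepended as \<open>t (e f)\<close> otherwise.\<close>

fun chain_cons :: "('t::monoid_mult \<Rightarrow> 'x::comm_monoid_mult \<Rightarrow> 'x) \<Rightarrow> 't \<Rightarrow> 'x \<Rightarrow> ('t \<times> 'x) list \<Rightarrow> ('t \<times> 'x) list" where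
  "chain_cons act t e [] = [(t, e)]"
| "chain_cons act t e ((t2, e2) # ds) =
     (if e * act t2 e2 = act t2 e2 then (t * t2, e2) # ds
      else if t2 = 1 then (t, e * e2) # ds
      else (t, e * act t2 e2) # (t2, e2) # ds)"

lemma chain_word_Nil [simp]: "chain_word [] = []"
  by (simp add: chain_word_def)

lemma chain_word_Cons [simp]: "chain_word ((t, e) # cs) = Inl t # Inr e # chain_word cs"
  by (simp add: chain_word_def)

lemma chain_word_append: "chain_word (cs @ ds) = chain_word cs @ chain_word ds"
  by (simp add: chain_word_def)

lemma chain_word_nonempty: "cs \<noteq> [] \<Longrightarrow> chain_word cs \<noteq> []"
  by (cases cs) auto

lemma canonical_chain_nonempty: "canonical_chain act cs \<Longrightarrow> cs \<noteq> []"
  by (cases cs) auto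

lemma canonical_chain_head: "canonical_chain act ((t, e) # cs) = canonical_chain act ((t', e) # cs)"
  by (cases cs) auto

lemma chain_nf_list_head: "chain_nf_list ((t, e) # cs) = chain_nf_list ((t', e) # cs)"
  by (cases cs) auto

lemma atom_eq_pclass_chain_word: "atom act t e = pclass act (chain_word [(t, e)])"
  by (simp add: atom_def)

lemma pclass_chain_word_Cons:
  "cs \<noteq> [] \<Longrightarrow> pclass act (chain_word ((t, e) # cs)) = pmul act (atom act t e) (pclass act (chain_word cs))"
  unfolding atom_def using pmul_pclass[of "[Inl t, Inr e]" "chain_word cs"] by (simp add: chain_word_nonempty)

lemma lprod_Cons: "hs \<noteq> [] \<Longrightarrow> lprod mul (h # hs) = mul h (lprod mul hs)"
  by (simp add: lprod_def)

lemma lprod_atoms: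
  "cs \<noteq> [] \<Longrightarrow> lprod (pmul act) (map (\<lambda>(t, e). atom act t e) cs) = pclass act (chain_word cs)"
proof (induction cs)
  case (Cons c cs)
  obtain t e where c: "c = (t, e)" by (cases c)
  show ?case
  proof (cases "cs = []")
    case True
    then show ?thesis using c by (simp add: lprod_def atom_eq_pclass_chain_word)
  next
    case False
    then show ?thesis using Cons.IH c
      by (simp add: lprod_Cons pclass_chain_word_Cons del: chain_word_Cons)
  qed
qed simp

lemma class_projT_atom: "class_projT (atom act t e) = t"
  unfolding atom_def by (subst class_projT_pclass) simp_all

lemma class_projT_embX: "class_projT (embX act e) = 1"
  unfolding embX_def by (subst class_projT_pclass) simp_all

lemma canonical_chain_iff_nth:
  "canonical_chain act cs \<longleftrightarrow> cs \<noteq> [] \<and>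
     (\<forall>i. Suc i < length cs \<longrightarrow>
        sless (*) (snd (cs ! i)) (act (fst (cs ! Suc i)) (snd (cs ! Suc i))) \<and> fst (cs ! Suc i) \<noteq> 1)"
proof (induction cs rule: induct_list012)
  case (3 x y zs)
  then show ?case unfolding all_Suc_less_Cons[of x] by (cases x; cases y) simp
qed auto

context semilattice_action
begin

lemma nf_plus_chain:
  "canonical_chain act cs \<Longrightarrow> cs = (t, e) # r \<Longrightarrow> nf_plus act (t, chain_nf_list cs) = act t e"
proof (induction cs arbitrary: t e r rule: induct_list012)
  case (2 x) then show ?case by (auto simp: act_one)
next
  case (3 x y zs)
  obtain t' e' where y: "y = (t', e')" by (cases y)
  have "nf_plus act (t', chain_nf_list (y # zs)) = act t' e'"
    using "3.IH"(2)[of t' e' zs] "3.prems" y by (cases x) simp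
  then show ?case using 3 y by (auto simp: sless_def sle_def)
qed auto

lemma nf_chain_word:
  "canonical_chain act cs \<Longrightarrow> cs = (t, e) # r \<Longrightarrow> nf act (chain_word cs) = (t, chain_nf_list cs)"
proof (induction cs arbitrary: t e r rule: induct_list012)
  case (2 x)
  then show ?case by (auto simp: act_one nf_step.simps(2) strip_unit_def)
next
  case (3 x y zs)
  obtain t' e' where y: "y = (t', e')" by (cases y)
  have x: "x = (t, e)" and canon: "canonical_chain act ((t, e) # (t', e') # zs)"
    using "3.prems" y by simp_all
  then have IH: "nf act (chain_word (y # zs)) = (t', chain_nf_list (y # zs))"
    using "3.IH"(2)[of t' e' zs] y by simp
  have "nf_plus act (t', chain_nf_list (y # zs)) = act t' e'"
    using canon y by (intro nf_plus_chain) simp_all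
  then have "nf_step act (Inr e) (t', chain_nf_list (y # zs)) = (1, (e, t') # chain_nf_list (y # zs))"
    using canon by (simp add: nf_step_Inr_new strip_unit_def sless_def sle_def)
  moreover have "chain_word (x # y # zs) = Inl t # Inr e # chain_word (y # zs)" using x by simp
  ultimately show ?case using IH x y by (simp del: chain_word_Cons)
qed auto

lemma nf_star_chain: "canonical_chain act cs \<Longrightarrow> nf_star (t, chain_nf_list cs) = snd (last cs)"
proof (induction cs arbitrary: t rule: induct_list012)
  case (2 x) then show ?case by (cases x) (simp add: nf_star_def)
next
  case (3 x y zs)
  obtain t1 e1 where x: "x = (t1, e1)" by (cases x)
  obtain t' e' where y: "y = (t', e')" by (cases y)
  have IH: "nf_star (t, chain_nf_list (y # zs)) = snd (last (y # zs))"
    using "3.IH"(2) "3.prems" x y by simp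
  show ?case
  proof (cases "chain_nf_list (y # zs) = []")
    case True
    then have "zs = [] \<and> e' = 1" using y by (cases zs) (auto split: if_splits)
    then show ?thesis using x y "3.prems" by (simp add: nf_star_def)
  next
    case False
    then show ?thesis using IH x y by (simp add: nf_star_Cons[where t' = t])
  qed
qed auto

lemma chain_nf_list_inj:
  "canonical_chain act cs \<Longrightarrow> canonical_chain act ds \<Longrightarrow> chain_nf_list cs = chain_nf_list ds \<Longrightarrow>
     fst (hd cs) = fst (hd ds) \<Longrightarrow> cs = ds"
proof (induction cs arbitrary: ds rule: induct_list012)
  case (2 x)
  obtain t e where x: "x = (t, e)" by (cases x)
  then obtain e2 r where ds: "ds = (t, e2) # r" using 2 by (cases ds) auto
  show ?case
    using 2 ds x by (cases r) (auto split: if_splits)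
next
  case (3 x y zs)
  obtain t1 e1 where x: "x = (t1, e1)" by (cases x)
  obtain t' e' where y: "y = (t', e')" by (cases y)
  obtain e2 r where ds: "ds = (t1, e2) # r" using 3 x by (cases ds) auto
  show ?case
  proof (cases r)
    case Nil
    then show ?thesis using 3 ds x y by (auto split: if_splits)
  next
    case (Cons q r2)
    then obtain t3 e3 where q: "q = (t3, e3)" by (cases q)
    have "y # zs = (t3, e3) # r2"
      using 3 ds Cons q x y by (intro "3.IH"(2)) auto
    then show ?thesis using 3 ds Cons q x y by auto
  qed
qed auto

lemma act_word_chain_word:
  "canonical_chain act cs \<Longrightarrow> cs = (t, e) # r \<Longrightarrow> act_word act (chain_word cs) 1 = act t e"
  using nf_chain_word nf_plus_chain by (simp add: act_word_eq_nf_plus del: chain_word_Cons)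

lemma pplus_chain:
  "canonical_chain act cs \<Longrightarrow> cs = (t, e) # r \<Longrightarrow> pplus act (pclass act (chain_word cs)) = embX act (act t e)"
  by (simp add: pplus_pclass chain_word_nonempty canonical_chain_nonempty act_word_chain_word embX_def
      del: chain_word_Cons)

lemma pstar_chain:
  assumes "canonical_chain act cs"
  shows "pstar act (pclass act (chain_word cs)) = embX act (snd (last cs))"
proof -
  obtain t e r where "cs = (t, e) # r" using canonical_chain_nonempty[OF assms] by (cases cs) auto
  then show ?thesis using assms
    by (simp add: pstar_pclass chain_word_nonempty nf_chain_word nf_star_chain del: chain_word_Cons)
qed

lemma pstar_atom: "pstar act (atom act t e) = embX act e"
  using pstar_chain[of "[(t, e)]"] by (simp add: atom_def)

lemma pplus_atom: "pplus act (atom act t e) = embX act (act t e)"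
  using pplus_chain[of "[(t, e)]"] by (simp add: atom_def)

lemma atom_one: "atom act 1 e = embX act e"
  unfolding atom_def embX_def using pclass_eq_iff_nf_eq[of "[Inl 1, Inr e]" "[Inr e]"] by simp

lemma pmul_atom_embX: "pmul act (atom act t e) (embX act g) = atom act t (e * g)"
proof -
  have "pmul act (atom act t e) (embX act g) = pclass act ([Inl t] @ [Inr e, Inr g])"
    unfolding atom_def embX_def by (subst pmul_pclass) simp_all
  also have "\<dots> = pclass act ([Inl t] @ [Inr (e * g)])"
    by (rule pclass_eqI[OF Pcong_append_left[OF Pcong_Inr_Inr[of act e g "[]"]]])
  finally show ?thesis by (simp add: atom_def)
qed

lemma canonical_chain_chain_cons:
  assumes "canonical_chain act ds"
  shows "canonical_chain act (chain_cons act t e ds)"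
proof -
  obtain t2 e2 r where ds: "ds = (t2, e2) # r"
    using canonical_chain_nonempty[OF assms] by (cases ds) auto
  define f where "f = act t2 e2"
  consider "e * f = f" | "e * f \<noteq> f" "t2 = 1" | "e * f \<noteq> f" "t2 \<noteq> 1" by blast
  then show ?thesis
  proof cases
    case 1
    then show ?thesis using assms canonical_chain_head[of act t2 e2 r "t * t2"] by (simp add: ds f_def)
  next
    case 2
    then have f: "f = e2" by (simp add: f_def act_one)
    show ?thesis
    proof (cases r)
      case Nil
      then show ?thesis using 2 by (simp add: ds f_def)
    next
      case (Cons q r')
      obtain t3 e3 where q: "q = (t3, e3)" by (cases q)
      have "sless (*) e2 (act t3 e3)" using assms ds Cons q by simp
      then have "e * e2 \<noteq> act t3 e3" "e * e2 * act t3 e3 = e * e2"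
        using below_product_neq(2)[of e e2 "act t3 e3"] 2 f by (auto simp: sless_def sle_def
            mult.commute mult.assoc)
      then show ?thesis using 2 assms ds Cons q f by (simp add: f_def sless_def sle_def)
    qed
  next
    case 3
    have "e * f * f = e * f" by (simp add: semilattice_simps)
    then show ?thesis using 3 assms ds by (simp add: f_def sless_def sle_def)
  qed
qed

lemma nf_chain_cons:
  assumes "canonical_chain act ds"
  shows "nf act (Inl t # Inr e # chain_word ds) = nf act (chain_word (chain_cons act t e ds))"
proof -
  obtain t2 e2 r where ds: "ds = (t2, e2) # r"
    using canonical_chain_nonempty[OF assms] by (cases ds) auto
  define f where "f = act t2 e2"
  have nf_ds: "nf act (chain_word ds) = (t2, chain_nf_list ds)" using nf_chain_word[OF assms ds] .
  have plus_ds: "nf_plus act (t2, chain_nf_list ds) = f" using nf_plus_chain[OF assms ds] by (simp add: f_def)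
  have canon': "canonical_chain act (chain_cons act t e ds)" by (rule canonical_chain_chain_cons[OF assms])
  consider "e * f = f" | "e * f \<noteq> f" "t2 = 1" | "e * f \<noteq> f" "t2 \<noteq> 1" by blast
  then show ?thesis
  proof cases
    case 1
    then have "chain_cons act t e ds = (t * t2, e2) # r" by (simp add: ds f_def)
    then show ?thesis using 1 nf_ds plus_ds canon' chain_nf_list_head[of t2 e2 r "t * t2"]
      by (simp add: nf_chain_word nf_step_Inr_absorbed ds del: chain_word_Cons)
  next
    case 2
    then have f: "f = e2" by (simp add: f_def act_one)
    have cons: "chain_cons act t e ds = (t, e * e2) # r" using 2 by (simp add: ds f_def)
    have "e * e2 \<noteq> 1" using below_product_neq(1) 2 f by simp
    then have "chain_nf_list ((t, e * e2) # r) = (e * e2, fst (strip_unit (t2, chain_nf_list ds))) #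
        snd (strip_unit (t2, chain_nf_list ds))"
      using 2 ds by (cases r) (auto simp: strip_unit_def)
    then show ?thesis using 2 f nf_ds plus_ds canon' cons
      by (simp add: nf_chain_word nf_step_Inr_new del: chain_word_Cons)
  next
    case 3
    then have "chain_cons act t e ds = (t, e * f) # ds" by (simp add: ds f_def)
    moreover have "chain_nf_list ((t, e * f) # ds) = (e * f, t2) # chain_nf_list ds"
      by (simp add: ds)
    ultimately show ?thesis using 3 nf_ds plus_ds canon'
      by (simp add: nf_chain_word nf_step_Inr_new strip_unit_id del: chain_word_Cons)
  qed
qed

lemma pmul_atom_chain:
  assumes "canonical_chain act ds"
  shows "pmul act (atom act t e) (pclass act (chain_word ds)) = pclass act (chain_word (chain_cons act t e ds))"
proof -
  have "pmul act (atom act t e) (pclass act (chain_word ds)) = pclass act (Inl t # Inr e # chain_word ds)"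
    unfolding atom_def using canonical_chain_nonempty[OF assms]
    by (subst pmul_pclass) (simp_all add: chain_word_nonempty)
  also have "\<dots> = pclass act (chain_word (chain_cons act t e ds))"
    using nf_chain_cons[OF assms] canonical_chain_nonempty[OF canonical_chain_chain_cons[OF assms]]
    by (subst pclass_eq_iff_nf_eq) (simp_all add: chain_word_nonempty del: chain_word_Cons)
  finally show ?thesis .
qed

lemma pmul_atom_atom:
  assumes "act s f * e = act s f"
  shows "pmul act (atom act t e) (atom act s f) = atom act (t * s) f"
  using pmul_atom_chain[of "[(s, f)]" t e] assms by (simp add: atom_def mult.commute)

lemma pmul_pplus_pclass_self: "u \<noteq> [] \<Longrightarrow> pmul act (pplus act (pclass act u)) (pclass act u) = pclass act u"
  by (simp add: pplus_pclass pmul_pclass pclass_eqI[OF Pcong_plus])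

lemma pplus_pmul_pclass:
  "u \<noteq> [] \<Longrightarrow> v \<noteq> [] \<Longrightarrow>
     pplus act (pmul act (pclass act u) (pclass act v)) =
     pplus act (pmul act (pclass act u) (pplus act (pclass act v)))"
  by (simp add: pplus_pclass pmul_pclass act_word_append)

lemma pstar_pmul_embX_below:
  assumes "u \<noteq> []"
  shows "pmul act (pstar act (pmul act (pclass act u) (embX act g))) (embX act g) =
    pstar act (pmul act (pclass act u) (embX act g))"
  using assms nf_star_append_Inr[of u g]
  by (simp add: embX_def pmul_pclass pstar_pclass pmul_embX_embX[unfolded embX_def])

lemma pmul_chain_embX:
  assumes "cs \<noteq> []" and "snd (last cs) * g = snd (last cs)"
  shows "pmul act (pclass act (chain_word cs)) (embX act g) = pclass act (chain_word cs)"
proof -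
  obtain tn en where last: "last cs = (tn, en)" by (cases "last cs")
  have "chain_word cs = chain_word (butlast cs @ [last cs])"
    using append_butlast_last_id[OF assms(1)] by simp
  then have w: "chain_word cs = (chain_word (butlast cs) @ [Inl tn]) @ [Inr en] @ []"
    using last by (simp add: chain_word_append)
  have "pmul act (pclass act (chain_word cs)) (embX act g) =
      pclass act ((chain_word (butlast cs) @ [Inl tn]) @ [Inr en, Inr g] @ [])"
    unfolding embX_def using assms(1) by (subst pmul_pclass) (simp_all add: w)
  also have "\<dots> = pclass act ((chain_word (butlast cs) @ [Inl tn]) @ [Inr (en * g)] @ [])"
    by (rule pclass_eqI[OF Pcong.ctxt[OF Pcong.gen[OF Pgen.Xmul]]])
  also have "\<dots> = pclass act (chain_word cs)" using assms(2) last w by simp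
  finally show ?thesis .
qed

end

section \<open>The monoid \<open>Q\<^sub>\<ell>(T,X,Y)\<close>\<close>

definition Y_chain :: "('t \<Rightarrow> 'x \<Rightarrow> 'x) \<Rightarrow> 'x set \<Rightarrow> ('t \<times> 'x) list \<Rightarrow> bool" where
  "Y_chain act Y cs \<longleftrightarrow> (\<forall>(t, e) \<in> set cs. e \<in> Y \<and> act t e \<in> Y)"

lemma Y_chain_Nil [simp]: "Y_chain act Y []"
  by (simp add: Y_chain_def)

lemma Y_chain_Cons [simp]: "Y_chain act Y ((t, e) # cs) \<longleftrightarrow> e \<in> Y \<and> act t e \<in> Y \<and> Y_chain act Y cs"
  by (simp add: Y_chain_def)

lemma Y_chain_append [simp]: "Y_chain act Y (cs @ ds) \<longleftrightarrow> Y_chain act Y cs \<and> Y_chain act Y ds"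
  by (auto simp: Y_chain_def)

locale Ql_setting = semilattice_action act for act :: "'t::monoid_mult \<Rightarrow> 'x::comm_monoid_mult \<Rightarrow> 'x" +
  fixes Y :: "'x set" and oneY :: 'x
  assumes Y_closed: "\<And>e f. e \<in> Y \<Longrightarrow> f \<in> Y \<Longrightarrow> e * f \<in> Y"
    and oneY_in: "oneY \<in> Y"
    and oneY_id: "\<And>e. e \<in> Y \<Longrightarrow> oneY * e = e"
    and condA: "\<And>t e f. e \<in> Y \<Longrightarrow> f \<in> Y \<Longrightarrow> e * f = e \<Longrightarrow> act t f \<in> Y \<Longrightarrow> act t e \<in> Y"
    and condB: "\<And>t. \<exists>g\<in>Y. act t g \<in> Y"
begin

lemma act_times_in_Y: "e \<in> Y \<Longrightarrow> f \<in> Y \<Longrightarrow> act t f \<in> Y \<Longrightarrow> act t (e * f) \<in> Y"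
  using condA[of "e * f" f t] Y_closed by (simp add: semilattice_simps)

lemma HQ_eq_atoms: "HQ act Y = {atom act t e | t e. e \<in> Y \<and> act t e \<in> Y}"
  unfolding HQ_def embT_def embX_def atom_def by (subst pmul_pclass) auto

lemma atom_in_HQ: "e \<in> Y \<Longrightarrow> act t e \<in> Y \<Longrightarrow> atom act t e \<in> HQ act Y"
  by (auto simp: HQ_eq_atoms)

lemma embX_in_HQ: "e \<in> Y \<Longrightarrow> embX act e \<in> HQ act Y"
  using atom_in_HQ[of e 1] by (simp add: atom_one act_one)

lemma HQ_subset_Ql: "HQ act Y \<subseteq> Ql act Y"
  unfolding Ql_def by (auto intro: sg_gen.gen)

lemma pmul_in_Ql: "a \<in> Ql act Y \<Longrightarrow> b \<in> Ql act Y \<Longrightarrow> pmul act a b \<in> Ql act Y"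
  unfolding Ql_def by (rule sg_gen.mul)

lemma embX_in_Ql: "e \<in> Y \<Longrightarrow> embX act e \<in> Ql act Y"
  using embX_in_HQ HQ_subset_Ql by blast

lemma Y_chain_chain_cons:
  assumes "Y_chain act Y ds" "e \<in> Y" "act t e \<in> Y"
  shows "Y_chain act Y (chain_cons act t e ds)"
proof (cases ds)
  case (Cons d r)
  obtain t2 e2 where d: "d = (t2, e2)" by (cases d)
  have Y: "e2 \<in> Y" "act t2 e2 \<in> Y" "Y_chain act Y r" using assms(1) Cons d by simp_all
  have "act t (e * e2) \<in> Y" "act t (e * act t2 e2) \<in> Y"
    using act_times_in_Y[OF Y(1) assms(2,3)] act_times_in_Y[OF Y(2) assms(2,3)]
    by (simp_all add: mult.commute)
  moreover have "act t (act t2 e2) \<in> Y" if "e * act t2 e2 = act t2 e2"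
    using act_times_in_Y[OF Y(2) assms(2,3)] that by (simp add: mult.commute)
  ultimately show ?thesis using assms Cons d Y Y_closed by (simp add: act_mult)
qed (use assms in simp)

lemma Ql_eq_Y_chain_classes: "Ql act Y = {pclass act (chain_word cs) | cs. cs \<noteq> [] \<and> Y_chain act Y cs}"
proof (intro set_eqI iffI)
  fix a assume "a \<in> Ql act Y"
  then show "a \<in> {pclass act (chain_word cs) | cs. cs \<noteq> [] \<and> Y_chain act Y cs}"
    unfolding Ql_def
  proof (induction rule: sg_gen.induct)
    case (gen a)
    then obtain t e where "a = atom act t e" "e \<in> Y" "act t e \<in> Y" by (auto simp: HQ_eq_atoms)
    then show ?case by (intro CollectI exI[of _ "[(t, e)]"]) (simp add: atom_def)
  next
    case (mul a b)
    then obtain cs ds where "a = pclass act (chain_word cs)" "b = pclass act (chain_word ds)"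
      "cs \<noteq> []" "ds \<noteq> []" "Y_chain act Y cs" "Y_chain act Y ds" by auto
    then show ?case
      by (intro CollectI exI[of _ "cs @ ds"]) (simp add: pmul_pclass chain_word_nonempty chain_word_append)
  qed
next
  fix a assume "a \<in> {pclass act (chain_word cs) | cs. cs \<noteq> [] \<and> Y_chain act Y cs}"
  then obtain cs where "a = pclass act (chain_word cs)" "cs \<noteq> []" "Y_chain act Y cs" by blast
  moreover have "pclass act (chain_word cs) \<in> Ql act Y" if "cs \<noteq> []" "Y_chain act Y cs" for cs
    using that
  proof (induction cs)
    case (Cons c cs)
    obtain t e where c: "c = (t, e)" by (cases c)
    then have atom: "atom act t e \<in> Ql act Y" using Cons.prems atom_in_HQ HQ_subset_Ql by auto
    show ?case
    proof (cases "cs = []")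
      case True
      then show ?thesis using atom c by (simp add: atom_def)
    next
      case False
      then show ?thesis using atom c Cons
        by (simp add: pclass_chain_word_Cons pmul_in_Ql del: chain_word_Cons)
    qed
  qed simp
  ultimately show "a \<in> Ql act Y" by blast
qed

lemma canonical_Y_chain_exists:
  "cs \<noteq> [] \<Longrightarrow> Y_chain act Y cs \<Longrightarrow>
     \<exists>ds. canonical_chain act ds \<and> Y_chain act Y ds \<and> pclass act (chain_word cs) = pclass act (chain_word ds)"
proof (induction cs)
  case (Cons c cs)
  obtain t e where c: "c = (t, e)" by (cases c)
  show ?case
  proof (cases "cs = []")
    case True
    then show ?thesis using Cons.prems c by (intro exI[of _ "[(t, e)]"]) simp
  next
    case False
    then obtain ds where ds: "canonical_chain act ds" "Y_chain act Y ds"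
      "pclass act (chain_word cs) = pclass act (chain_word ds)" using Cons c by auto
    have "pclass act (chain_word (c # cs)) = pclass act (chain_word (chain_cons act t e ds))"
      using False ds c by (simp add: pclass_chain_word_Cons pmul_atom_chain del: chain_word_Cons)
    then show ?thesis using ds Cons.prems c
      by (intro exI[of _ "chain_cons act t e ds"])
        (simp add: canonical_chain_chain_cons Y_chain_chain_cons)
  qed
qed simp

lemma Ql_canonical_chainE:
  assumes "a \<in> Ql act Y"
  obtains cs where "canonical_chain act cs" "Y_chain act Y cs" "a = pclass act (chain_word cs)"
  using assms canonical_Y_chain_exists unfolding Ql_eq_Y_chain_classes by blast

lemma Ql_pclassE:
  assumes "a \<in> Ql act Y"
  obtains u where "u \<noteq> []" "a = pclass act u"
  using assms chain_word_nonempty unfolding Ql_eq_Y_chain_classes by blast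

lemma Ql_subset_Pl: "Ql act Y \<subseteq> Pl act"
  by (auto simp: Pl_def elim: Ql_pclassE)

lemma pplus_Ql: "a \<in> Ql act Y \<Longrightarrow> \<exists>f\<in>Y. pplus act a = embX act f"
proof (elim Ql_canonical_chainE)
  fix cs assume cs: "canonical_chain act cs" "Y_chain act Y cs" and a: "a = pclass act (chain_word cs)"
  then obtain t e r where "cs = (t, e) # r" using canonical_chain_nonempty by (cases cs) auto
  then show "\<exists>f\<in>Y. pplus act a = embX act f" using cs a pplus_chain by auto
qed

lemma pstar_Ql: "a \<in> Ql act Y \<Longrightarrow> \<exists>f\<in>Y. pstar act a = embX act f"
proof (elim Ql_canonical_chainE)
  fix cs assume cs: "canonical_chain act cs" "Y_chain act Y cs" and a: "a = pclass act (chain_word cs)"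
  have "snd (last cs) \<in> Y"
    using cs last_in_set[OF canonical_chain_nonempty[OF cs(1)]] by (auto simp: Y_chain_def)
  then show "\<exists>f\<in>Y. pstar act a = embX act f" using cs a pstar_chain by auto
qed

lemma pplus_image_Ql: "pplus act ` Ql act Y = embX act ` Y"
proof
  show "pplus act ` Ql act Y \<subseteq> embX act ` Y" using pplus_Ql by blast
  show "embX act ` Y \<subseteq> pplus act ` Ql act Y"
  proof
    fix x assume "x \<in> embX act ` Y"
    then obtain f where "f \<in> Y" "x = embX act f" by blast
    then show "x \<in> pplus act ` Ql act Y" using embX_in_Ql pplus_embX by (metis image_eqI)
  qed
qed

lemma pmul_assoc_Ql:
  "x \<in> Ql act Y \<Longrightarrow> y \<in> Ql act Y \<Longrightarrow> z \<in> Ql act Y \<Longrightarrow>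
     pmul act (pmul act x y) z = pmul act x (pmul act y z)"
  by (elim Ql_pclassE) (simp add: pmul_pclass)

lemma Ql_is_monoid: "is_monoid (Ql act Y) (pmul act) (embX act oneY)"
  unfolding is_monoid_def
proof (intro conjI ballI)
  show "embX act oneY \<in> Ql act Y" using embX_in_Ql oneY_in by simp
next
  fix x y assume "x \<in> Ql act Y" "y \<in> Ql act Y"
  then show "pmul act x y \<in> Ql act Y" by (rule pmul_in_Ql)
next
  fix x y z assume "x \<in> Ql act Y" "y \<in> Ql act Y" "z \<in> Ql act Y"
  then show "pmul act (pmul act x y) z = pmul act x (pmul act y z)" by (rule pmul_assoc_Ql)
next
  fix x assume x_Ql: "x \<in> Ql act Y"
  then obtain cs where cs: "canonical_chain act cs" "Y_chain act Y cs" and x: "x = pclass act (chain_word cs)"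
    by (rule Ql_canonical_chainE)
  have cs_ne: "chain_word cs \<noteq> []" using cs(1) by (simp add: canonical_chain_nonempty chain_word_nonempty)
  obtain t e r where cs_eq: "cs = (t, e) # r" using canonical_chain_nonempty[OF cs(1)] by (cases cs) auto
  have plus_x: "pplus act x = embX act (act t e)" using pplus_chain[OF cs(1) cs_eq] x by simp
  have "act t e \<in> Y" using cs(2) cs_eq by simp
  then have "pmul act (embX act oneY) (pplus act x) = pplus act x"
    by (simp add: plus_x pmul_embX_embX oneY_id)
  moreover have "pmul act (pplus act x) x = x" using x cs_ne by (simp add: pmul_pplus_pclass_self)
  ultimately show "pmul act (embX act oneY) x = x"
    using pmul_assoc_Ql[OF embX_in_Ql[OF oneY_in] _ x_Ql, of "pplus act x"] plus_x embX_in_Ql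
      \<open>act t e \<in> Y\<close> by metis
  have "snd (last cs) \<in> Y"
    using cs last_in_set[OF canonical_chain_nonempty[OF cs(1)]] by (auto simp: Y_chain_def)
  then have "snd (last cs) * oneY = snd (last cs)" by (metis oneY_id mult.commute)
  then show "pmul act x (embX act oneY) = x"
    using pmul_chain_embX canonical_chain_nonempty[OF cs(1)] x by simp
qed

lemma Ql_star_left_ehresmann:
  "star_left_ehresmann (Ql act Y) (pmul act) (embX act oneY) (pplus act) (pstar act)"
  unfolding star_left_ehresmann_def
proof (intro conjI ballI)
  show "is_monoid (Ql act Y) (pmul act) (embX act oneY)" by (rule Ql_is_monoid)
next
  fix x assume x: "x \<in> Ql act Y"
  obtain f where f: "f \<in> Y" "pplus act x = embX act f" using pplus_Ql[OF x] by blast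
  obtain g where g: "g \<in> Y" "pstar act x = embX act g" using pstar_Ql[OF x] by blast
  show "pplus act x \<in> Ql act Y" using f embX_in_Ql by simp
  show "pstar act x \<in> Ql act Y" using g embX_in_Ql by simp
  show "pmul act (pplus act x) x = x" using x by (elim Ql_pclassE) (simp add: pmul_pplus_pclass_self)
  show "pstar act (pstar act x) = pstar act x" using g pstar_embX by simp
  show "pplus act (pstar act x) = pstar act x" using g pplus_embX by simp
  show "pstar act (pplus act x) = pplus act x" using f pstar_embX by simp
  show "pmul act x (pstar act x) = x"
  proof (rule Ql_canonical_chainE[OF x])
    fix cs assume "canonical_chain act cs" "x = pclass act (chain_word cs)"
    then show ?thesis
      using pmul_chain_embX[OF canonical_chain_nonempty] by (simp add: pstar_chain idem)
  qed
next
  fix x y assume x: "x \<in> Ql act Y" and y: "y \<in> Ql act Y"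
  obtain f where f: "pplus act x = embX act f" using pplus_Ql[OF x] by blast
  obtain g where g: "pstar act x = embX act g" using pstar_Ql[OF x] by blast
  obtain f' where f': "pplus act y = embX act f'" using pplus_Ql[OF y] by blast
  obtain g' where g': "pstar act y = embX act g'" using pstar_Ql[OF y] by blast
  show "pplus act (pmul act (pplus act x) (pplus act y)) = pmul act (pplus act x) (pplus act y)"
    using f f' by (simp add: pmul_embX_embX pplus_embX)
  show "pmul act (pplus act x) (pplus act y) = pmul act (pplus act y) (pplus act x)"
    using f f' by (simp add: pmul_embX_embX mult.commute)
  show "pplus act (pmul act x y) = pplus act (pmul act x (pplus act y))"
    using x y by (elim Ql_pclassE) (simp add: pplus_pmul_pclass)
  show "pmul act (pstar act x) (pstar act y) = pmul act (pstar act y) (pstar act x)"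
    using g g' by (simp add: pmul_embX_embX mult.commute)
  show "pmul act (pstar act (pmul act x (pstar act y))) (pstar act y) = pstar act (pmul act x (pstar act y))"
    using x g' by (elim Ql_pclassE) (simp add: pstar_pmul_embX_below)
qed

abbreviation sigmaQ :: "(('t, 'x) pword set \<times> ('t, 'x) pword set) set" where
  "sigmaQ \<equiv> sigma_rel (Ql act Y) (pmul act) (embX act ` Y)"

lemma sigma_Ql_eq: "sigma (Ql act Y) (pmul act) (pplus act) = sigmaQ"
  by (simp add: sigma_def pplus_image_Ql)

lemma class_projT_pmul_Ql:
  "a \<in> Ql act Y \<Longrightarrow> b \<in> Ql act Y \<Longrightarrow> class_projT (pmul act a b) = class_projT a * class_projT b"
  by (elim Ql_pclassE) (simp add: pmul_pclass class_projT_pclass projT_append)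

lemma sigmaQ_class_projT: "(a, b) \<in> sigmaQ \<Longrightarrow> a \<in> Ql act Y \<and> b \<in> Ql act Y \<and> class_projT a = class_projT b"
proof (induction rule: sigma_rel.induct)
  case (base e f)
  then show ?case using embX_in_Ql by (auto simp: class_projT_embX)
next
  case (left a b c)
  then show ?case using class_projT_pmul_Ql pmul_in_Ql by simp
next
  case (right a b c)
  then show ?case using class_projT_pmul_Ql pmul_in_Ql by simp
qed auto

lemma sigmaQ_atoms:
  assumes "e \<in> Y" "act t e \<in> Y" "f \<in> Y" "act t f \<in> Y"
  shows "(atom act t e, atom act t f) \<in> sigmaQ"
proof -
  have "(pmul act (atom act t e) (embX act f), pmul act (atom act t e) (embX act e)) \<in> sigmaQ"
    using assms atom_in_HQ HQ_subset_Ql by (intro sigma_rel.left sigma_rel.base) auto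
  moreover have "(pmul act (atom act t f) (embX act e), pmul act (atom act t f) (embX act f)) \<in> sigmaQ"
    using assms atom_in_HQ HQ_subset_Ql by (intro sigma_rel.left sigma_rel.base) auto
  ultimately have "(atom act t (e * f), atom act t e) \<in> sigmaQ" "(atom act t (e * f), atom act t f) \<in> sigmaQ"
    by (simp_all add: pmul_atom_embX idem mult.commute)
  then show ?thesis by (meson sigma_rel.sym sigma_rel.trans)
qed

text \<open>Condition (B) provides the common lower bound \<open>g\<close> that lets two adjacent atoms be
  merged into one, modulo \<open>\<sigma>\<close>.\<close>

lemma sigmaQ_pmul_atoms:
  assumes e: "e \<in> Y" "act t e \<in> Y" and f: "f \<in> Y" "act s f \<in> Y"
  shows "\<exists>g\<in>Y. act (t * s) g \<in> Y \<and> (pmul act (atom act t e) (atom act s f), atom act (t * s) g) \<in> sigmaQ"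
proof -
  obtain g0 where g0: "g0 \<in> Y" "act (t * s) g0 \<in> Y" using condB by blast
  define g where "g = g0 * f"
  have g: "g \<in> Y" "act s g \<in> Y" "act t (act s g) \<in> Y"
    using Y_closed act_times_in_Y[OF g0(1) f] act_times_in_Y[OF f(1) g0] g0 f
    by (simp_all add: g_def act_mult[symmetric] mult.commute)
  have atoms: "atom act t e \<in> Ql act Y" "atom act s f \<in> Ql act Y" "atom act t (act s g) \<in> Ql act Y"
    using e f g atom_in_HQ HQ_subset_Ql by auto
  have "(pmul act (atom act t e) (atom act s f), pmul act (atom act t e) (atom act s g)) \<in> sigmaQ"
    using sigmaQ_atoms[OF f g(1,2)] atoms by (intro sigma_rel.left)
  moreover have "(pmul act (atom act t e) (atom act s g), pmul act (atom act t (act s g)) (atom act s g)) \<in> sigmaQ"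
    using sigmaQ_atoms[OF e g(2,3)] g atom_in_HQ HQ_subset_Ql by (intro sigma_rel.right) auto
  moreover have "pmul act (atom act t (act s g)) (atom act s g) = atom act (t * s) g"
    by (rule pmul_atom_atom) (simp add: idem)
  ultimately show ?thesis using g by (metis sigma_rel.trans act_mult)
qed

lemma Ql_sigma_HQ: "m \<in> Ql act Y \<Longrightarrow> \<exists>h\<in>HQ act Y. (m, h) \<in> sigmaQ"
proof -
  have "\<exists>t e. e \<in> Y \<and> act t e \<in> Y \<and> (pclass act (chain_word cs), atom act t e) \<in> sigmaQ"
    if "cs \<noteq> []" "Y_chain act Y cs" for cs
    using that
  proof (induction cs)
    case (Cons c cs)
    obtain t e where c: "c = (t, e)" by (cases c)
    have te: "e \<in> Y" "act t e \<in> Y" and atom_Ql: "atom act t e \<in> Ql act Y"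
      using Cons.prems c atom_in_HQ HQ_subset_Ql by auto
    show ?case
    proof (cases "cs = []")
      case True
      then show ?thesis using te atom_Ql c by (auto simp: atom_def intro: sigma_rel.refl)
    next
      case False
      then obtain s f where sf: "f \<in> Y" "act s f \<in> Y" "(pclass act (chain_word cs), atom act s f) \<in> sigmaQ"
        using Cons c by auto
      obtain g where g: "g \<in> Y" "act (t * s) g \<in> Y"
        "(pmul act (atom act t e) (atom act s f), atom act (t * s) g) \<in> sigmaQ"
        using sigmaQ_pmul_atoms[OF te sf(1,2)] by blast
      have "(pclass act (chain_word (c # cs)), pmul act (atom act t e) (atom act s f)) \<in> sigmaQ"
        using sigma_rel.left[OF sf(3) atom_Ql] False c by (simp add: pclass_chain_word_Cons del: chain_word_Cons)
      then show ?thesis using g by (meson sigma_rel.trans)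
    qed
  qed simp
  moreover assume "m \<in> Ql act Y"
  ultimately show ?thesis unfolding Ql_eq_Y_chain_classes using atom_in_HQ by blast
qed

lemma HQ_sigma_pmul_lift:
  assumes h: "h \<in> HQ act Y" and k: "k \<in> HQ act Y" and w: "w \<in> HQ act Y"
    and hk_w: "(pmul act h k, w) \<in> sigmaQ" and "pstar act k = pstar act w"
  shows "\<exists>u\<in>HQ act Y. (u, h) \<in> sigmaQ \<and> sle (pmul act) (pplus act k) (pstar act u)"
proof -
  obtain t e where h': "h = atom act t e" "e \<in> Y" "act t e \<in> Y" using h by (auto simp: HQ_eq_atoms)
  obtain s f where k': "k = atom act s f" "f \<in> Y" "act s f \<in> Y" using k by (auto simp: HQ_eq_atoms)
  obtain r g where w': "w = atom act r g" "g \<in> Y" "act r g \<in> Y" using w by (auto simp: HQ_eq_atoms)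
  have "f = g" using assms(5) k' w' by (simp add: pstar_atom embX_inj)
  have "class_projT (pmul act h k) = class_projT w" using sigmaQ_class_projT[OF hk_w] by simp
  moreover have "atom act t e \<in> Ql act Y" "atom act s f \<in> Ql act Y"
    using h' k' atom_in_HQ HQ_subset_Ql by auto
  ultimately have "r = t * s" using h' k' w' by (simp add: class_projT_pmul_Ql class_projT_atom)
  then have "act t (act s f) \<in> Y" using w' \<open>f = g\<close> by (simp add: act_mult)
  then have "atom act t (act s f) \<in> HQ act Y" "(atom act t (act s f), h) \<in> sigmaQ"
    using atom_in_HQ sigmaQ_atoms k' h' by auto
  moreover have "sle (pmul act) (pplus act k) (pstar act (atom act t (act s f)))"
    by (simp add: k' pstar_atom pplus_atom pmul_embX_embX sle_def idem)
  ultimately show ?thesis by blast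
qed

lemma atom_in_projections_iff: "e \<in> Y \<Longrightarrow> atom act t e \<in> pplus act ` Ql act Y \<longleftrightarrow> t = 1"
  using class_projT_atom[of act t e] class_projT_embX[of act]
  by (auto simp: pplus_image_Ql atom_one)

lemma Ql_atomic: "atomic (Ql act Y) (pmul act) (pplus act) (pstar act) (HQ act Y)"
  unfolding atomic_def sigma_Ql_eq
proof (intro conjI ballI impI)
  show "HQ act Y \<subseteq> Ql act Y" by (rule HQ_subset_Ql)
  show "pplus act ` Ql act Y \<subseteq> HQ act Y" using pplus_image_Ql embX_in_HQ by auto
next
  fix h e assume h: "h \<in> HQ act Y" and e: "e \<in> pplus act ` Ql act Y"
  obtain t a where h': "h = atom act t a" "a \<in> Y" "act t a \<in> Y" using h by (auto simp: HQ_eq_atoms)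
  obtain g where g: "g \<in> Y" "e = embX act g" using e pplus_image_Ql by auto
  have "a * g \<in> Y" "act t (a * g) \<in> Y" using h' g Y_closed act_times_in_Y[OF g(1) h'(2,3)]
    by (simp_all add: mult.commute)
  then show "pmul act h e \<in> HQ act Y" using h' g by (simp add: pmul_atom_embX atom_in_HQ)
  show "pstar act (pmul act h e) = pmul act (pstar act h) e"
    using h' g by (simp add: pmul_atom_embX pstar_atom pmul_embX_embX)
next
  fix h k assume h: "h \<in> HQ act Y" and k: "k \<in> HQ act Y - pplus act ` Ql act Y"
    and le: "sle (pmul act) (pplus act k) (pstar act h)"
  obtain t e where h': "h = atom act t e" "e \<in> Y" "act t e \<in> Y" using h by (auto simp: HQ_eq_atoms)
  obtain s f where k': "k = atom act s f" "f \<in> Y" "act s f \<in> Y" using k by (auto simp: HQ_eq_atoms)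
  have le': "act s f * e = act s f" using le h' k' embX_sle_iff by (simp add: pplus_atom pstar_atom sle_def)
  then have "act t (act s f) \<in> Y" using condA[of "act s f" e t] h' k' by simp
  then show "pmul act h k \<in> HQ act Y" using h' k' le' by (simp add: pmul_atom_atom atom_in_HQ act_mult)
  show "pstar act (pmul act h k) = pstar act k" using h' k' le' by (simp add: pmul_atom_atom pstar_atom)
next
  fix m assume "m \<in> Ql act Y"
  then show "\<exists>h\<in>HQ act Y. (m, h) \<in> sigmaQ" by (rule Ql_sigma_HQ)
next
  fix h k w assume "h \<in> HQ act Y" "k \<in> HQ act Y" "w \<in> HQ act Y"
    "(pmul act h k, w) \<in> sigmaQ \<and> pstar act k = pstar act w"
  then show "\<exists>u\<in>HQ act Y. (u, h) \<in> sigmaQ \<and> sle (pmul act) (pplus act k) (pstar act u)"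
    using HQ_sigma_pmul_lift by blast
qed

text \<open>Properness: an atom \<open>t e\<close> is determined by its \<open>T\<close>-component, which \<open>\<sigma>\<close> preserves,
  and by \<open>(t e)\<^sup>* = e\<close>.\<close>

lemma Ql_proper: "proper (Ql act Y) (pmul act) (pplus act) (pstar act) (HQ act Y)"
  unfolding proper_def sigma_Ql_eq
proof (intro ballI iffI)
  fix h k assume h: "h \<in> HQ act Y" and k: "k \<in> HQ act Y" and hk: "pstar act h = pstar act k \<and> (h, k) \<in> sigmaQ"
  obtain t e where h': "h = atom act t e" using h by (auto simp: HQ_eq_atoms)
  obtain s f where k': "k = atom act s f" using k by (auto simp: HQ_eq_atoms)
  have "e = f" using hk h' k' by (simp add: pstar_atom embX_inj)
  moreover have "t = s" using sigmaQ_class_projT[of h k] hk h' k' by (simp add: class_projT_atom)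
  ultimately show "h = k" using h' k' by simp
next
  fix h k assume "h \<in> HQ act Y" "h = k"
  then show "pstar act h = pstar act k \<and> (h, k) \<in> sigmaQ"
    using HQ_subset_Ql by (auto intro: sigma_rel.refl)
qed

lemma canonical_form_atoms_iff:
  assumes "Y_chain act Y cs"
  shows "canonical_form (Ql act Y) (pmul act) (pplus act) (pstar act) (HQ act Y)
      (map (\<lambda>(t, e). atom act t e) cs) \<longleftrightarrow> canonical_chain act cs"
proof -
  have Y: "snd (cs ! i) \<in> Y" "act (fst (cs ! i)) (snd (cs ! i)) \<in> Y" if "i < length cs" for i
    using assms nth_mem[OF that] by (auto simp: Y_chain_def)
  have "set (map (\<lambda>(t, e). atom act t e) cs) \<subseteq> HQ act Y"
    using assms by (auto simp: Y_chain_def atom_in_HQ)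
  then show ?thesis
    unfolding canonical_form_def canonical_chain_iff_nth all_pos_less_iff
    using Y by (auto simp: split_beta pstar_atom pplus_atom embX_sless_iff atom_in_projections_iff)
qed

lemma HQ_list_atoms: "set hs \<subseteq> HQ act Y \<Longrightarrow> \<exists>cs. Y_chain act Y cs \<and> hs = map (\<lambda>(t, e). atom act t e) cs"
proof (induction hs)
  case (Cons h hs)
  then obtain cs where cs: "Y_chain act Y cs" "hs = map (\<lambda>(t, e). atom act t e) cs" by auto
  obtain t e where "h = atom act t e" "e \<in> Y" "act t e \<in> Y" using Cons.prems by (auto simp: HQ_eq_atoms)
  then show ?case using cs by (intro exI[of _ "(t, e) # cs"]) simp
qed simp

text \<open>Uniqueness of canonical forms: two canonical chains with the same class have the same
  normal form, from which the chain can be read off.\<close>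

lemma Ql_has_canonical_forms: "has_canonical_forms (Ql act Y) (pmul act) (pplus act) (pstar act) (HQ act Y)"
  unfolding has_canonical_forms_def
proof
  fix m assume "m \<in> Ql act Y"
  then obtain cs where cs: "canonical_chain act cs" "Y_chain act Y cs" and m: "m = pclass act (chain_word cs)"
    by (rule Ql_canonical_chainE)
  have cs_ne: "cs \<noteq> []" using canonical_chain_nonempty[OF cs(1)] .
  let ?canonical = "canonical_form (Ql act Y) (pmul act) (pplus act) (pstar act) (HQ act Y)"
  show "\<exists>!hs. ?canonical hs \<and> lprod (pmul act) hs = m"
  proof (rule ex1I[of _ "map (\<lambda>(t, e). atom act t e) cs"])
    show "?canonical (map (\<lambda>(t, e). atom act t e) cs) \<and> lprod (pmul act) (map (\<lambda>(t, e). atom act t e) cs) = m"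
      using canonical_form_atoms_iff[OF cs(2)] cs cs_ne m lprod_atoms by simp
  next
    fix hs assume hs: "?canonical hs \<and> lprod (pmul act) hs = m"
    then have "set hs \<subseteq> HQ act Y" by (simp add: canonical_form_def)
    then obtain ds where ds: "Y_chain act Y ds" "hs = map (\<lambda>(t, e). atom act t e) ds"
      using HQ_list_atoms by blast
    have ds_canon: "canonical_chain act ds" using hs ds canonical_form_atoms_iff by simp
    then have ds_ne: "ds \<noteq> []" by (rule canonical_chain_nonempty)
    have "pclass act (chain_word ds) = pclass act (chain_word cs)"
      using hs ds lprod_atoms[OF ds_ne] m by simp
    then have "nf act (chain_word ds) = nf act (chain_word cs)"
      using pclass_eq_iff_nf_eq chain_word_nonempty ds_ne cs_ne by blast
    moreover obtain t e r where "cs = (t, e) # r" using cs_ne by (cases cs) auto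
    moreover obtain t' e' r' where "ds = (t', e') # r'" using ds_ne by (cases ds) auto
    ultimately have "chain_nf_list ds = chain_nf_list cs" "fst (hd ds) = fst (hd cs)"
      using nf_chain_word cs(1) ds_canon by (metis Pair_inject list.sel(1) fst_conv)+
    then have "ds = cs" using chain_nf_list_inj[OF ds_canon cs(1)] by simp
    then show "hs = map (\<lambda>(t, e). atom act t e) cs" using ds by simp
  qed
qed

lemma Ql_proper_basis: "proper_basis (Ql act Y) (pmul act) (pplus act) (pstar act) (HQ act Y)"
  unfolding proper_basis_def basis_def
  using Ql_atomic Ql_has_canonical_forms Ql_proper by (simp add: Ql_def)

end

theorem mainTheorem18:
  fixes act :: "'t::monoid_mult \<Rightarrow> 'x::comm_monoid_mult \<Rightarrow> 'x"
    and Y :: "'x set" and oneY :: 'x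
  assumes X_semilattice: "\<forall>e::'x. e * e = e"
    and act_one: "\<forall>x. act 1 x = x"
    and act_mult: "\<forall>s t x. act (s * t) x = act s (act t x)"
    and act_mono: "\<forall>t e f. sle (*) e f \<longrightarrow> sle (*) (act t e) (act t f)"
    and Y_closed: "\<forall>e\<in>Y. \<forall>f\<in>Y. e * f \<in> Y"
    and oneY_in: "oneY \<in> Y"
    and oneY_id: "\<forall>e\<in>Y. oneY * e = e"
    and condA: "\<forall>t. \<forall>e\<in>Y. \<forall>f\<in>Y. sle (*) e f \<longrightarrow> act t f \<in> Y \<longrightarrow> act t e \<in> Y"
    and condB: "\<forall>t. \<exists>g\<in>Y. act t g \<in> Y"
  shows "Ql act Y \<subseteq> Pl act
    \<and> (\<forall>a\<in>Ql act Y. \<forall>b\<in>Ql act Y. pmul act a b \<in> Ql act Y)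
    \<and> (\<forall>a\<in>Ql act Y. pplus act a \<in> Ql act Y \<and> pstar act a \<in> Ql act Y)
    \<and> is_monoid (Ql act Y) (pmul act) (embX act oneY)
    \<and> star_left_ehresmann (Ql act Y) (pmul act) (embX act oneY) (pplus act) (pstar act)
    \<and> pplus act ` Ql act Y = embX act ` Y
    \<and> proper_basis (Ql act Y) (pmul act) (pplus act) (pstar act) (HQ act Y)"
proof -
  interpret Ql_setting act Y oneY
    using assms by unfold_locales (auto simp: sle_def)
  have "\<forall>a\<in>Ql act Y. pplus act a \<in> Ql act Y \<and> pstar act a \<in> Ql act Y"
    using Ql_star_left_ehresmann by (simp add: star_left_ehresmann_def)
  then show ?thesis
    using Ql_subset_Pl pmul_in_Ql Ql_is_monoid Ql_star_left_ehresmann pplus_image_Ql Ql_proper_basis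
    by blast
qed

end
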